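(* Let $d\in\mathbb{N}^+$, $a<b$, let $f\in C([a,b]^d)$, and let $N=36d(2d+1)$ and $L=11$. Then for every $\varepsilon>0$ there exists $\phi\in\mathscr{H}_d(N,L)$ such that $|\phi(\boldsymbol{x})-f(\boldsymbol{x})|<\varepsilon$ for all $\boldsymbol{x}\in[a,b]^d$.
   Context: Let $\sigma_1:\mathbb{R}\to\mathbb{R}$ be the continuous triangular-wave function of period $2$: $\sigma_1(x)=|x|$ for $x\in[-1,1]$ and $\sigma_1(x+2)=\sigma_1(x)$ for all $x$ (equivalently $\sigma_1(x)=|x-2\lfloor (x+1)/2\rfloor|$). Let $\sigma_2(x)=x/(|x|+1)$ (softsign). The activation function (EUAF) is $\sigma(x)=\sigma_1(x)$ for $x\ge 0$ and $\sigma(x)=\sigma_2(x)$ for $x<0$; it is applied to vectors entrywise. For $N,L\in\mathbb{N}^+$, $\mathscr{H}_d(N,L)$ is the set of all functions $\phi:\mathbb{R}^d\to\mathbb{R}$ of the form $\phi=\mathcal{L}_L\circ\sigma\circ\mathcal{L}_{L-1}\circ\cdots\circ\sigma\circ\mathcal{L}_1\circ\sigma\circ\mathcal{L}_0$, where $\mathcal{L}_0:\mathbb{R}^d\to\mathbb{R}^N$, $\mathcal{L}_i:\mathbb{R}^N\to\mathbb{R}^N$ for $1\le i\le L-1$, and $\mathcal{L}_L:\mathbb{R}^N\to\mathbb{R}$ are arbitrary affine maps (real weight matrices and bias vectors); i.e. functions computed by $\sigma$-activated feed-forward networks with $L$ hidden layers each having exactly $N$ neurons. *)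

theory Defs
  imports "HOL-Analysis.Analysis"
begin

definition sigma1 :: "real \<Rightarrow> real" where
  "sigma1 x = \<bar>x - 2 * of_int \<lfloor>(x + 1) / 2\<rfloor>\<bar>"

definition sigma2 :: "real \<Rightarrow> real" where
  "sigma2 x = x / (\<bar>x\<bar> + 1)"

definition euaf :: "real \<Rightarrow> real" where
  "euaf x = (if x \<ge> 0 then sigma1 x else sigma2 x)"

text \<open>W0, b0: first affine map R^d -> R^N (input index type 'n);
  W i, bb i: affine map of hidden layer i (i \<ge> 1) R^N -> R^N.
  hidden W0 b0 W bb N x k = output vector (after activation) of hidden layer k+1.\<close>
fun hidden :: "(nat \<Rightarrow> 'n::finite \<Rightarrow> real) \<Rightarrow> (nat \<Rightarrow> real)
      \<Rightarrow> (nat \<Rightarrow> nat \<Rightarrow> nat \<Rightarrow> real) \<Rightarrow> (nat \<Rightarrow> nat \<Rightarrow> real)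
      \<Rightarrow> nat \<Rightarrow> real^'n \<Rightarrow> nat \<Rightarrow> (nat \<Rightarrow> real)" where
  "hidden W0 b0 W bb N x 0 = (\<lambda>j. euaf ((\<Sum>i\<in>UNIV. W0 j i * x $ i) + b0 j))"
| "hidden W0 b0 W bb N x (Suc k) =
     (\<lambda>j. euaf ((\<Sum>i<N. W (Suc k) j i * hidden W0 b0 W bb N x k i) + bb (Suc k) j))"

text \<open>H_d(N,L): functions computed by EUAF networks with L hidden layers of width N.\<close>
definition H_net :: "nat \<Rightarrow> nat \<Rightarrow> (real^'n::finite \<Rightarrow> real) set" where
  "H_net N L = {\<phi>. \<exists>W0 b0 W bb (wL :: nat \<Rightarrow> real) (cL :: real).
      \<phi> = (\<lambda>x. (\<Sum>i<N. wL i * hidden W0 b0 W bb N x (L - 1) i) + cL)}"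

end

theory Submission
  imports Defs "HOL-Computational_Algebra.Polynomial"
begin

text \<open>The network looks at \<open>d + 1\<close> grids of mesh \<open>(b - a)/K\<close>, shifted against each other by \<open>1/(d + 1)\<close>
  of a mesh. For each grid the triangle wave computes the code \<open>n\<close> of the cell containing \<open>x\<close>; this is
  exact unless \<open>x\<close> is near a cell boundary, and a weight vanishing near the boundaries discards those
  grids, at least one of which keeps full weight by pigeonhole. Softsign turns \<open>n\<close> into \<open>1/(n + c)\<close>,
  with \<open>c\<close> chosen so that these numbers are linearly independent over \<open>\<rat>\<close>; by Kronecker's theorem a
  single weight \<open>t\<close> then makes \<open>sigma1 (2t/(n + c))\<close> close to the value of \<open>f\<close> on cell \<open>n\<close> for all
  cells at once. The weighted average over the grids needs products and a reciprocal, which softsign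
  provides up to an error that vanishes with a scale parameter.\<close>

section \<open>The activation function\<close>

lemma even_remainder_bounds:
  "-1 \<le> x - 2 * of_int \<lfloor>(x + 1) / 2\<rfloor>" "x - 2 * of_int \<lfloor>(x + 1) / 2\<rfloor> < 1"
proof -
  have "of_int \<lfloor>(x + 1) / 2\<rfloor> \<le> (x + 1) / 2" "(x + 1) / 2 < of_int \<lfloor>(x + 1) / 2\<rfloor> + 1"
    by linarith+
  then show "-1 \<le> x - 2 * of_int \<lfloor>(x + 1) / 2\<rfloor>" "x - 2 * of_int \<lfloor>(x + 1) / 2\<rfloor> < 1"
    by (simp_all add: field_simps)
qed

lemma sigma1_periodic: "sigma1 (x + 2 * of_int k) = sigma1 x"
proof -
  have "(x + 2 * of_int k + 1) / 2 = (x + 1) / 2 + of_int k"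
    by (simp add: field_simps)
  then have "\<lfloor>(x + 2 * of_int k + 1) / 2\<rfloor> = \<lfloor>(x + 1) / 2\<rfloor> + k"
    by (metis floor_add_int)
  then show ?thesis
    by (simp add: sigma1_def algebra_simps)
qed

lemma sigma1_eq_abs: "\<bar>x\<bar> \<le> 1 \<Longrightarrow> sigma1 x = \<bar>x\<bar>"
proof (cases "x = 1")
  case False
  assume "\<bar>x\<bar> \<le> 1"
  with False have "\<lfloor>(x + 1) / 2\<rfloor> = 0"
    by (subst floor_eq_iff) auto
  then show ?thesis
    by (simp add: sigma1_def)
qed (simp add: sigma1_def)

lemma sigma1_nonneg: "0 \<le> sigma1 x"
  by (simp add: sigma1_def)

lemma sigma1_le_one: "sigma1 x \<le> 1"
  using even_remainder_bounds[of x] by (simp add: sigma1_def)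

lemma sigma1_le_dist_even: "sigma1 x \<le> \<bar>x - 2 * of_int k\<bar>"
proof -
  define m where "m = \<lfloor>(x + 1) / 2\<rfloor>"
  have m: "-1 \<le> x - 2 * of_int m" "x - 2 * of_int m < 1"
    unfolding m_def by (fact even_remainder_bounds)+
  consider "k = m" | "of_int k \<ge> (of_int m :: real) + 1" | "of_int k \<le> (of_int m :: real) - 1"
    by (cases "k = m") (linarith, fastforce)
  then show ?thesis
    by cases (use m in \<open>auto simp: sigma1_def m_def[symmetric]\<close>)
qed

lemma sigma1_lipschitz: "\<bar>sigma1 x - sigma1 y\<bar> \<le> \<bar>x - y\<bar>"
proof -
  have "sigma1 x \<le> sigma1 y + \<bar>x - y\<bar>" for x y
    using sigma1_le_dist_even[of x "\<lfloor>(y + 1) / 2\<rfloor>"] by (simp add: sigma1_def)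
  from this[of x y] this[of y x] show ?thesis
    by linarith
qed

lemma sigma1_diff_le: "sigma1 (x - y) \<le> sigma1 x + sigma1 y"
proof -
  define m where "m = \<lfloor>(x + 1) / 2\<rfloor>"
  define m' where "m' = \<lfloor>(y + 1) / 2\<rfloor>"
  have "sigma1 (x - y) \<le> \<bar>(x - y) - 2 * of_int (m - m')\<bar>"
    by (rule sigma1_le_dist_even)
  also have "\<dots> \<le> \<bar>x - 2 * of_int m\<bar> + \<bar>y - 2 * of_int m'\<bar>"
    by simp
  finally show ?thesis
    by (simp add: sigma1_def m_def m'_def)
qed

lemma sigma1_shift_one: "sigma1 (x + 1) = 1 - sigma1 x"
proof -
  define m where "m = \<lfloor>(x + 1) / 2\<rfloor>"
  define r where "r = x - 2 * of_int m"
  have r: "-1 \<le> r" "r < 1"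
    unfolding r_def m_def by (fact even_remainder_bounds)+
  have "sigma1 x = \<bar>r\<bar>"
    by (simp add: sigma1_def r_def m_def)
  moreover have "sigma1 (x + 1) = sigma1 (r + 1)"
    using sigma1_periodic[of "r + 1" m] by (simp add: r_def)
  moreover have "sigma1 (r + 1) = 1 - \<bar>r\<bar>"
  proof (cases "r \<le> 0")
    case False
    have "sigma1 (r + 1) = sigma1 ((r - 1) + 2 * of_int 1)"
      by (rule arg_cong[where f = sigma1]) simp
    also have "\<dots> = 1 - \<bar>r\<bar>"
      using False r by (subst sigma1_periodic, subst sigma1_eq_abs) auto
    finally show ?thesis .
  qed (use r in \<open>simp add: sigma1_eq_abs\<close>)
  ultimately show ?thesis
    by simp
qed

lemma sigma1_fraction_ge:
  fixes q D :: int
  assumes "0 < D" "\<not> D dvd q"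
  shows "2 / of_int D \<le> sigma1 (2 * of_int q / of_int D)"
proof -
  define m where "m = \<lfloor>(2 * of_int q / of_int D + 1) / 2 :: real\<rfloor>"
  define k where "k = q - m * D"
  have "k \<noteq> 0"
    using assms(2) unfolding k_def by (metis dvd_triv_right eq_iff_diff_eq_0)
  then have "1 \<le> \<bar>of_int k :: real\<bar>"
    by linarith
  then have "2 / of_int D \<le> 2 * \<bar>of_int k\<bar> / (of_int D :: real)"
    using assms(1) by (simp add: divide_right_mono)
  also have "\<dots> = \<bar>2 * of_int k / of_int D\<bar>"
    using assms(1) by (simp add: abs_mult abs_div)
  also have "2 * of_int k / of_int D = 2 * of_int q / of_int D - 2 * (of_int m :: real)"
    using assms(1) by (simp add: k_def field_simps)
  finally show ?thesis
    by (simp add: sigma1_def m_def)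
qed

lemma sigma1_double_close:
  assumes "0 \<le> y" "y \<le> 1" "\<bar>z - of_int m - y / 2\<bar> < e"
  shows "\<bar>sigma1 (2 * z) - y\<bar> < 2 * e"
proof -
  have "sigma1 (2 * z) = sigma1 ((2 * z - 2 * of_int m) + 2 * of_int m)"
    by simp
  also have "\<dots> = sigma1 (2 * z - 2 * of_int m)"
    by (rule sigma1_periodic)
  finally have "\<bar>sigma1 (2 * z) - y\<bar> = \<bar>sigma1 (2 * z - 2 * of_int m) - sigma1 y\<bar>"
    using assms(1,2) by (simp add: sigma1_eq_abs)
  also have "\<dots> \<le> \<bar>(2 * z - 2 * of_int m) - y\<bar>"
    by (rule sigma1_lipschitz)
  also have "\<dots> = \<bar>2 * (z - of_int m - y / 2)\<bar>"
    by (rule arg_cong[where f = abs]) (simp add: algebra_simps)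
  also have "\<dots> < 2 * e"
    using assms(3) by (simp add: abs_mult)
  finally show ?thesis .
qed

lemma euaf_nonneg_eq: "0 \<le> x \<Longrightarrow> euaf x = sigma1 x"
  by (simp add: euaf_def)

lemma euaf_neg_eq: "x < 0 \<Longrightarrow> euaf x = x / (1 - x)"
  by (simp add: euaf_def sigma2_def)

lemma euaf_id: "0 \<le> x \<Longrightarrow> x \<le> 1 \<Longrightarrow> euaf x = x"
  by (simp add: euaf_nonneg_eq sigma1_eq_abs)

lemma euaf_zero [simp]: "euaf 0 = 0"
  by (simp add: euaf_id)

lemma euaf_shift_two: "\<bar>z\<bar> \<le> 1 \<Longrightarrow> euaf (z + 2) = \<bar>z\<bar>"
  using sigma1_periodic[of z 1] by (simp add: euaf_nonneg_eq sigma1_eq_abs)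

lemma euaf_reciprocal: "1 \<le> Z \<Longrightarrow> euaf (1 - Z) + 1 = 1 / Z"
  by (cases "Z = 1") (simp_all add: euaf_neg_eq field_simps)

lemma mult_max_zero_divide: "0 < C \<Longrightarrow> C * max 0 (y / C) = max 0 (y :: real)"
  by (simp add: max_def field_simps)

definition euaf_relu :: "real \<Rightarrow> real" where
  "euaf_relu z = (2 * euaf ((z + 1) / 2) - 1 + euaf (z + 2)) / 2"

lemma euaf_relu_eq:
  assumes "\<bar>z\<bar> \<le> 1"
  shows "euaf_relu z = max 0 z"
proof -
  have "euaf ((z + 1) / 2) = (z + 1) / 2"
    using assms by (intro euaf_id) auto
  then show ?thesis
    by (auto simp: euaf_relu_def euaf_shift_two[OF assms] max_def abs_if)
qed

definition euaf_square :: "real \<Rightarrow> real \<Rightarrow> real" where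
  "euaf_square h z = 4 * (euaf (-1 + h * z) + euaf (-1 - h * z) + 1) / h^2"

lemma euaf_square_pair:
  fixes p :: real
  assumes "\<bar>p\<bar> < 1"
  shows "euaf (-1 + p) + euaf (-1 - p) + 1 = p^2 / (4 - p^2)"
proof -
  have p: "-1 < p" "p < 1"
    using assms by linarith+
  have e: "euaf (-1 + p) = (p - 1) / (2 - p)" "euaf (-1 - p) = - (1 + p) / (2 + p)"
    using p by (simp_all add: euaf_neg_eq)
  have "\<bar>p * p\<bar> < 1"
    using abs_mult_less[OF assms assms] by simp
  then have "4 - p * p \<noteq> 0"
    by linarith
  then show ?thesis
    unfolding e using p by (simp add: field_simps power2_eq_square)
qed

lemma euaf_square_error:
  assumes "0 < h" "h \<le> 1/6" "\<bar>z\<bar> \<le> 3"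
  shows "\<bar>euaf_square h z - z^2\<bar> \<le> 27 * h^2"
proof -
  define q where "q = (h * z)^2"
  have hz: "\<bar>h * z\<bar> \<le> 1/2"
    using mult_mono[OF assms(2,3)] assms(1) by (simp add: abs_mult)
  then have q: "0 \<le> q" "q \<le> 1/4"
    using power_mono[OF hz, of 2] by (simp_all add: q_def power2_eq_square)
  have "euaf_square h z = 4 * (q / (4 - q)) / h^2"
    using euaf_square_pair[of "h * z"] hz by (simp add: euaf_square_def q_def)
  also have "\<dots> = 4 * (q / h^2) / (4 - q)"
    using assms(1) q by (simp add: field_simps)
  also have "q / h^2 = z^2"
    using assms(1) by (simp add: q_def power_mult_distrib)
  also have "4 * z^2 / (4 - q) = z^2 + z^2 * q / (4 - q)"
    using q by (simp add: field_simps)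
  finally have "\<bar>euaf_square h z - z^2\<bar> = z^2 * q / (4 - q)"
    using q by simp
  also have "\<dots> \<le> z^2 * q / 3"
    using q by (intro divide_left_mono) auto
  also have "\<dots> = (z^2)^2 * h^2 / 3"
    by (simp add: q_def power_mult_distrib power2_eq_square)
  also have "\<dots> \<le> 9^2 * h^2 / 3"
    using power_mono[of "\<bar>z\<bar>" 3 2] assms(3)
    by (intro divide_right_mono mult_right_mono power_mono) simp_all
  finally show ?thesis
    by simp
qed

definition euaf_mult :: "real \<Rightarrow> real \<Rightarrow> real \<Rightarrow> real" where
  "euaf_mult h x y = (euaf_square h (x + y) - euaf_square h (x - y)) / 4"

lemma euaf_mult_error:
  assumes "0 < h" "h \<le> 1/6" "\<bar>x + y\<bar> \<le> 3" "\<bar>x - y\<bar> \<le> 3"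
  shows "\<bar>euaf_mult h x y - x * y\<bar> \<le> 14 * h^2"
proof -
  have "euaf_mult h x y - x * y
      = ((euaf_square h (x + y) - (x + y)^2) - (euaf_square h (x - y) - (x - y)^2)) / 4"
    by (simp add: euaf_mult_def power2_eq_square field_simps)
  moreover have "\<bar>euaf_square h (x + y) - (x + y)^2\<bar> \<le> 27 * h^2"
    "\<bar>euaf_square h (x - y) - (x - y)^2\<bar> \<le> 27 * h^2"
    using assms by (simp_all add: euaf_square_error)
  ultimately show ?thesis
    by (simp add: abs_le_iff)
qed

text \<open>An estimate of the even integer nearest to \<open>\<tau>\<close>: the inner term is nonzero only on
  \<open>(2m - 1, 2m - 1/2)\<close>, where it corrects the sign of \<open>\<tau> - 2m\<close>; this fails only within
  \<open>\<delta>/(1 + \<delta>)\<close> of an odd integer.\<close>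

definition floor_estimate :: "real \<Rightarrow> real \<Rightarrow> real" where
  "floor_estimate \<delta> \<tau> = \<tau> + sigma1 \<tau> - 2 * max 0 (sigma1 \<tau> - max 0 (1/2 - sigma1 (\<tau> + 1/2)) / \<delta>)"

lemma sigma1_add_half:
  assumes "-1 \<le> r" "r < 1"
  shows "sigma1 ((r + 1/2) + 2 * of_int m) = (if r \<le> 1/2 then \<bar>r + 1/2\<bar> else 3/2 - r)"
proof (cases "r \<le> 1/2")
  case False
  have "sigma1 (r + 1/2) = sigma1 ((r - 3/2) + 2 * of_int 1)"
    by (rule arg_cong[where f = sigma1]) simp
  with False assms show ?thesis
    by (simp only: sigma1_periodic) (simp add: sigma1_eq_abs)
qed (use assms in \<open>simp add: sigma1_periodic sigma1_eq_abs\<close>)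

lemma floor_estimate_ge:
  assumes "0 \<le> \<tau>" "0 < \<delta>"
  shows "-1 \<le> floor_estimate \<delta> \<tau>"
proof -
  have "0 \<le> max 0 (1/2 - sigma1 (\<tau> + 1/2)) / \<delta>"
    using assms(2) by simp
  then have "max 0 (sigma1 \<tau> - max 0 (1/2 - sigma1 (\<tau> + 1/2)) / \<delta>) \<le> sigma1 \<tau>"
    using sigma1_nonneg[of \<tau>] by linarith
  then show ?thesis
    unfolding floor_estimate_def using assms(1) sigma1_le_one[of \<tau>] by argo
qed

lemma floor_estimate_eq:
  assumes \<delta>: "0 < \<delta>" "\<delta> \<le> 1" and near: "sigma1 \<tau> \<le> 1 / (1 + \<delta>)"
  shows "floor_estimate \<delta> \<tau> = 2 * of_int \<lfloor>(\<tau> + 1) / 2\<rfloor>"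
proof -
  define m where "m = \<lfloor>(\<tau> + 1) / 2\<rfloor>"
  define r where "r = \<tau> - 2 * of_int m"
  have r: "-1 \<le> r" "r < 1"
    unfolding r_def m_def by (fact even_remainder_bounds)+
  have abs_r: "sigma1 \<tau> = \<bar>r\<bar>"
    by (simp add: sigma1_def r_def m_def)
  have "sigma1 (\<tau> + 1/2) = sigma1 ((r + 1/2) + 2 * of_int m)"
    by (simp add: r_def)
  then have half: "sigma1 (\<tau> + 1/2) = (if r \<le> 1/2 then \<bar>r + 1/2\<bar> else 3/2 - r)"
    using sigma1_add_half[OF r] by simp
  have "max 0 (\<bar>r\<bar> - max 0 (1/2 - sigma1 (\<tau> + 1/2)) / \<delta>) = max 0 r"
  proof -
    consider "0 \<le> r" | "-1/2 \<le> r" "r < 0" | "r < -1/2"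
      by linarith
    then show ?thesis
    proof cases
      case 2
      have "r \<le> r * \<delta>"
        using mult_left_mono_neg[OF \<delta>(2), of r] 2 by simp
      then show ?thesis
        using 2 \<delta> half by (simp add: pos_divide_le_eq)
    next
      case 3
      have "- r * \<delta> \<le> 1 + r"
        using near abs_r 3 \<delta> by (simp add: field_simps)
      then show ?thesis
        using 3 r \<delta> half by (simp add: pos_le_divide_eq)
    qed (use half r in auto)
  qed
  then have "floor_estimate \<delta> \<tau> = \<tau> + \<bar>r\<bar> - 2 * max 0 r"
    by (simp add: floor_estimate_def abs_r)
  also have "\<dots> = \<tau> - r"
    by (simp add: max_def abs_if)
  finally show ?thesis
    by (simp add: r_def m_def)
qed

lemma weighted_average_close:
  fixes \<rho> G :: "'a \<Rightarrow> real"
  assumes "finite I" "\<And>s. s \<in> I \<Longrightarrow> 0 \<le> \<rho> s" "0 < (\<Sum>s\<in>I. \<rho> s)"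
    and close: "\<And>s. s \<in> I \<Longrightarrow> 0 < \<rho> s \<Longrightarrow> \<bar>G s - y\<bar> \<le> e"
  shows "\<bar>(\<Sum>s\<in>I. \<rho> s * G s) / (\<Sum>s\<in>I. \<rho> s) - y\<bar> \<le> e"
proof -
  have bound: "\<bar>\<rho> s * (G s - y)\<bar> \<le> \<rho> s * e" if "s \<in> I" for s
    using assms(2)[OF that] close[OF that] by (cases "\<rho> s = 0") (simp_all add: abs_mult)
  have "\<bar>\<Sum>s\<in>I. \<rho> s * (G s - y)\<bar> \<le> (\<Sum>s\<in>I. \<bar>\<rho> s * (G s - y)\<bar>)"
    by (rule sum_abs)
  also have "\<dots> \<le> (\<Sum>s\<in>I. \<rho> s * e)"
    using bound by (rule sum_mono)
  also have "\<dots> = (\<Sum>s\<in>I. \<rho> s) * e"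
    by (simp add: sum_distrib_right)
  finally have "\<bar>\<Sum>s\<in>I. \<rho> s * (G s - y)\<bar> \<le> (\<Sum>s\<in>I. \<rho> s) * e" .
  moreover have "(\<Sum>s\<in>I. \<rho> s * (G s - y)) = (\<Sum>s\<in>I. \<rho> s * G s) - (\<Sum>s\<in>I. \<rho> s) * y"
    by (simp add: right_diff_distrib sum_subtractf sum_distrib_right)
  then have "(\<Sum>s\<in>I. \<rho> s * G s) / (\<Sum>s\<in>I. \<rho> s) - y = (\<Sum>s\<in>I. \<rho> s * (G s - y)) / (\<Sum>s\<in>I. \<rho> s)"
    using assms(3) by (simp add: field_simps)
  ultimately show ?thesis
    using assms(3) by (simp add: abs_div pos_divide_le_eq mult.commute)
qed

lemma card_UN_le_mult:
  "finite I \<Longrightarrow> (\<And>i. i \<in> I \<Longrightarrow> card (A i) \<le> m) \<Longrightarrow> card (\<Union>i\<in>I. A i) \<le> card I * m"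
  using card_UN_le[of I A] sum_bounded_above[of I "\<lambda>i. card (A i)" m] by simp

lemma sum_digits_less:
  fixes P :: nat
  assumes "\<forall>j<k. a j < P"
  shows "(\<Sum>j<k. a j * P ^ j) < P ^ k"
  using assms
proof (induction k)
  case (Suc k)
  have "(\<Sum>j<Suc k. a j * P ^ j) < P ^ k + a k * P ^ k"
    using Suc by simp
  also have "\<dots> \<le> P ^ k + (P - 1) * P ^ k"
    using Suc.prems by (intro add_left_mono mult_right_mono) auto
  also have "\<dots> = P ^ Suc k"
    using Suc.prems by (cases P) (auto simp: algebra_simps)
  finally show ?case .
qed simp

lemma sum_digits_inj:
  fixes P :: nat
  assumes "\<forall>j<k. a j < P" "\<forall>j<k. b j < P"
    and "(\<Sum>j<k. a j * P ^ j) = (\<Sum>j<k. b j * P ^ j)"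
  shows "\<forall>j<k. a j = b j"
  using assms
proof (induction k)
  case (Suc k)
  have lower: "(\<Sum>j<k. a j * P ^ j) < P ^ k" "(\<Sum>j<k. b j * P ^ j) < P ^ k"
    using Suc.prems(1,2) by (simp_all add: sum_digits_less)
  have eq: "(\<Sum>j<k. a j * P ^ j) + a k * P ^ k = (\<Sum>j<k. b j * P ^ j) + b k * P ^ k"
    using Suc.prems(3) by simp
  have pos: "0 < P ^ k"
    using Suc.prems(1) by (cases P) auto
  have "a k = ((\<Sum>j<k. a j * P ^ j) + a k * P ^ k) div P ^ k"
    using lower(1) pos by simp
  also have "\<dots> = b k"
    unfolding eq using lower(2) pos by simp
  finally have "a k = b k" .
  moreover have "\<forall>j<k. a j = b j"
    using Suc \<open>a k = b k\<close> eq by simp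
  ultimately show ?case
    using less_Suc_eq by auto
qed simp

section \<open>Networks as layers of neurons\<close>

definition affine_combs :: "('a \<Rightarrow> real) set \<Rightarrow> ('a \<Rightarrow> real) set" where
  "affine_combs S = {h. \<exists>c e. \<forall>x. h x = (\<Sum>g\<in>S. c g * g x) + e}"

lemma affine_combs_const: "(\<lambda>x. e) \<in> affine_combs S"
  unfolding affine_combs_def by (auto intro!: exI[of _ "\<lambda>_. 0"])

lemma affine_combs_base:
  assumes "finite S" "g \<in> S"
  shows "g \<in> affine_combs S"
proof -
  have "(\<Sum>g'\<in>S. (if g' = g then 1 else 0) * g' x) = (\<Sum>g'\<in>S. if g' = g then g x else 0)" for x
    by (intro sum.cong) auto
  also have "\<dots> x = g x" for x
    using assms by simp
  finally show ?thesis
    unfolding affine_combs_def by (intro CollectI exI[of _ "\<lambda>g'. if g' = g then 1 else 0"] exI[of _ 0]) simp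
qed

lemma affine_combs_add:
  assumes "f \<in> affine_combs S" "g \<in> affine_combs S"
  shows "(\<lambda>x. f x + g x) \<in> affine_combs S"
proof -
  obtain c e c' e' where "\<forall>x. f x = (\<Sum>h\<in>S. c h * h x) + e" "\<forall>x. g x = (\<Sum>h\<in>S. c' h * h x) + e'"
    using assms unfolding affine_combs_def by blast
  then show ?thesis
    unfolding affine_combs_def
    by (intro CollectI exI[of _ "\<lambda>h. c h + c' h"] exI[of _ "e + e'"])
      (simp add: distrib_right sum.distrib)
qed

lemma affine_combs_cmult:
  assumes "f \<in> affine_combs S"
  shows "(\<lambda>x. r * f x) \<in> affine_combs S"
proof -
  obtain c e where "\<forall>x. f x = (\<Sum>h\<in>S. c h * h x) + e"
    using assms unfolding affine_combs_def by blast
  then show ?thesis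
    unfolding affine_combs_def
    by (intro CollectI exI[of _ "\<lambda>h. r * c h"] exI[of _ "r * e"])
      (simp add: distrib_left sum_distrib_left mult.assoc)
qed

lemma affine_combs_mult_right: "f \<in> affine_combs S \<Longrightarrow> (\<lambda>x. f x * r) \<in> affine_combs S"
  using affine_combs_cmult[of f S r] by (simp add: mult.commute)

lemma affine_combs_diff:
  "f \<in> affine_combs S \<Longrightarrow> g \<in> affine_combs S \<Longrightarrow> (\<lambda>x. f x - g x) \<in> affine_combs S"
  using affine_combs_add[of f S "\<lambda>x. -1 * g x"] affine_combs_cmult[of g S "-1"] by simp

lemma affine_combs_divide: "f \<in> affine_combs S \<Longrightarrow> (\<lambda>x. f x / r) \<in> affine_combs S"
  using affine_combs_cmult[of f S "1 / r"] by simp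

lemma affine_combs_sum:
  "finite I \<Longrightarrow> (\<And>i. i \<in> I \<Longrightarrow> F i \<in> affine_combs S) \<Longrightarrow> (\<lambda>x. \<Sum>i\<in>I. F i x) \<in> affine_combs S"
  by (induction I rule: finite_induct) (auto intro: affine_combs_const affine_combs_add)

lemmas affine_combs_intros = affine_combs_const affine_combs_add affine_combs_cmult
  affine_combs_mult_right affine_combs_diff affine_combs_divide

definition relay :: "('a \<Rightarrow> real) \<Rightarrow> 'a \<Rightarrow> real" where
  "relay g = (\<lambda>x. euaf (g x))"

lemma relay_id: "0 \<le> g x \<Longrightarrow> g x \<le> 1 \<Longrightarrow> relay g x = g x"
  by (simp add: relay_def euaf_id)

lemma relay_power_id: "0 \<le> g x \<Longrightarrow> g x \<le> 1 \<Longrightarrow> (relay ^^ n) g x = g x"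
  by (induction n) (simp_all add: relay_id)

definition neurons_over :: "('a \<Rightarrow> real) set \<Rightarrow> ('a \<Rightarrow> real) set" where
  "neurons_over S = relay ` affine_combs S"

lemma relay_over: "h \<in> affine_combs S \<Longrightarrow> relay h \<in> neurons_over S"
  unfolding neurons_over_def by blast

text \<open>The neurons from which the next affine map reads off \<open>euaf_relu\<close> (two of them) and
  \<open>euaf_mult\<close> (four of them).\<close>

definition relu_neurons :: "('a \<Rightarrow> real) \<Rightarrow> ('a \<Rightarrow> real) set" where
  "relu_neurons z = {\<lambda>x. euaf ((z x + 1) / 2), \<lambda>x. euaf (z x + 2)}"

definition square_neurons :: "real \<Rightarrow> ('a \<Rightarrow> real) \<Rightarrow> ('a \<Rightarrow> real) set" where
  "square_neurons h z = {\<lambda>x. euaf (-1 + h * z x), \<lambda>x. euaf (-1 - h * z x)}"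

definition mult_neurons :: "real \<Rightarrow> ('a \<Rightarrow> real) \<Rightarrow> ('a \<Rightarrow> real) \<Rightarrow> ('a \<Rightarrow> real) set" where
  "mult_neurons h u v = square_neurons h (\<lambda>x. u x + v x) \<union> square_neurons h (\<lambda>x. u x - v x)"

lemma relu_neurons_over: "z \<in> affine_combs S \<Longrightarrow> relu_neurons z \<subseteq> neurons_over S"
  unfolding relu_neurons_def by (auto intro!: relay_over[unfolded relay_def] affine_combs_intros)

lemma square_neurons_over: "z \<in> affine_combs S \<Longrightarrow> square_neurons h z \<subseteq> neurons_over S"
  unfolding square_neurons_def by (auto intro!: relay_over[unfolded relay_def] affine_combs_intros)

lemma mult_neurons_over:
  "u \<in> affine_combs S \<Longrightarrow> v \<in> affine_combs S \<Longrightarrow> mult_neurons h u v \<subseteq> neurons_over S"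
  unfolding mult_neurons_def by (intro Un_least square_neurons_over affine_combs_intros)

lemma relu_readout:
  assumes "finite S" "relu_neurons z \<subseteq> S"
  shows "(\<lambda>x. euaf_relu (z x)) \<in> affine_combs S"
proof -
  have "(\<lambda>x. euaf ((z x + 1) / 2)) \<in> affine_combs S" "(\<lambda>x. euaf (z x + 2)) \<in> affine_combs S"
    using assms by (auto simp: relu_neurons_def intro: affine_combs_base)
  then show ?thesis
    unfolding euaf_relu_def by (intro affine_combs_intros)
qed

lemma mult_readout:
  assumes "finite S" "mult_neurons h u v \<subseteq> S"
  shows "(\<lambda>x. euaf_mult h (u x) (v x)) \<in> affine_combs S"
proof -
  have "f \<in> affine_combs S" if "f \<in> mult_neurons h u v" for f
    using assms that by (auto intro: affine_combs_base)
  then have "(\<lambda>x. euaf (-1 + h * (u x + v x))) \<in> affine_combs S"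
    "(\<lambda>x. euaf (-1 - h * (u x + v x))) \<in> affine_combs S"
    "(\<lambda>x. euaf (-1 + h * (u x - v x))) \<in> affine_combs S"
    "(\<lambda>x. euaf (-1 - h * (u x - v x))) \<in> affine_combs S"
    unfolding mult_neurons_def square_neurons_def by blast+
  then show ?thesis
    unfolding euaf_mult_def euaf_square_def by (intro affine_combs_intros)
qed

lemma card_relu_neurons: "card (relu_neurons z) \<le> 2"
  by (simp add: relu_neurons_def card_insert_if)

lemma card_mult_neurons: "card (mult_neurons h u v) \<le> 4"
proof -
  have square: "card (square_neurons h z) \<le> 2" for z :: "'a \<Rightarrow> real"
    by (simp add: square_neurons_def card_insert_if)
  have "card (mult_neurons h u v)
      \<le> card (square_neurons h (\<lambda>x. u x + v x)) + card (square_neurons h (\<lambda>x. u x - v x))"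
    unfolding mult_neurons_def by (rule card_Un_le)
  also have "\<dots> \<le> 2 + 2"
    by (intro add_mono square)
  finally show ?thesis
    by simp
qed

text \<open>Neuron \<open>j\<close> of hidden layer \<open>k\<close> computes \<open>g k j\<close>; the neurons beyond the width \<open>w k\<close> of the
  layer get zero weights and output \<open>euaf 0 = 0\<close>.\<close>

lemma hidden_eq_enumerated_layers:
  fixes g :: "nat \<Rightarrow> nat \<Rightarrow> real^'n::finite \<Rightarrow> real" and w :: "nat \<Rightarrow> nat"
  assumes width: "\<And>k. k < L \<Longrightarrow> w k \<le> N"
    and first: "\<And>j. j < w 0 \<Longrightarrow> g 0 j = (\<lambda>x. euaf ((\<Sum>i\<in>UNIV. W0 j i * x $ i) + b0 j))"
    and step: "\<And>k j. Suc k < L \<Longrightarrow> j < w (Suc k) \<Longrightarrow>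
      g (Suc k) j = (\<lambda>x. euaf ((\<Sum>i<w k. W (Suc k) j i * g k i x) + bb (Suc k) j))"
    and pad0: "\<And>j i. w 0 \<le> j \<Longrightarrow> W0 j i = 0 \<and> b0 j = 0"
    and pad: "\<And>k j i. w (Suc k) \<le> j \<Longrightarrow> W (Suc k) j i = 0 \<and> bb (Suc k) j = 0"
    and "k < L"
  shows "hidden W0 b0 W bb N x k j = (if j < w k then g k j x else 0)"
  using \<open>k < L\<close>
proof (induction k arbitrary: j)
  case 0
  then show ?case
    using first pad0 by simp
next
  case (Suc k)
  have "(\<Sum>i<N. W (Suc k) j i * hidden W0 b0 W bb N x k i)
      = (\<Sum>i<N. if i < w k then W (Suc k) j i * g k i x else 0)"
    using Suc by (intro sum.cong) auto
  also have "\<dots> = (\<Sum>i\<in>{i\<in>{..<N}. i < w k}. W (Suc k) j i * g k i x)"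
    by (rule sum.inter_filter[symmetric]) simp
  also have "{i\<in>{..<N}. i < w k} = {..<w k}"
    using width[of k] Suc.prems by auto
  finally show ?case
    using step[OF Suc.prems] pad by auto
qed

lemma sum_coordinates:
  "(\<Sum>g\<in>range (\<lambda>i x. x $ i). c g * g (x :: real^'n::finite)) = (\<Sum>i\<in>UNIV. c (\<lambda>x. x $ i) * x $ i)"
proof -
  have "inj (\<lambda>i (x :: real^'n). x $ i)"
  proof (rule injI)
    fix i j :: 'n
    assume "(\<lambda>x :: real^'n. x $ i) = (\<lambda>x. x $ j)"
    from fun_cong[OF this, of "axis i 1"] show "i = j"
      by (simp add: axis_def split: if_splits)
  qed
  then show ?thesis
    by (simp add: sum.reindex)
qed

lemma neurons_over_coefficients:
  assumes "\<And>k. P k \<Longrightarrow> T k \<subseteq> neurons_over (S k)"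
  obtains C E where "\<And>k g x. P k \<Longrightarrow> g \<in> T k \<Longrightarrow> g x = euaf ((\<Sum>g'\<in>S k. C k g g' * g' x) + E k g)"
proof -
  define C where "C k g = (SOME c. \<exists>e. \<forall>x. g x = euaf ((\<Sum>g'\<in>S k. c g' * g' x) + e))" for k g
  define E where "E k g = (SOME e. \<forall>x. g x = euaf ((\<Sum>g'\<in>S k. C k g g' * g' x) + e))" for k g
  have "g x = euaf ((\<Sum>g'\<in>S k. C k g g' * g' x) + E k g)" if k: "P k" "g \<in> T k" for k g x
  proof -
    obtain h where h: "h \<in> affine_combs (S k)" "g = relay h"
      using assms[OF k(1)] k(2) unfolding neurons_over_def by blast
    then obtain c e where "\<forall>x. h x = (\<Sum>g'\<in>S k. c g' * g' x) + e"
      unfolding affine_combs_def by blast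
    then have "\<exists>c e. \<forall>x. g x = euaf ((\<Sum>g'\<in>S k. c g' * g' x) + e)"
      using h(2) by (auto simp: relay_def)
    then have "\<exists>e. \<forall>x. g x = euaf ((\<Sum>g'\<in>S k. C k g g' * g' x) + e)"
      unfolding C_def by (rule someI_ex)
    then show ?thesis
      unfolding E_def by (rule someI_ex[THEN spec])
  qed
  then show ?thesis
    by (rule that)
qed

lemma H_net_of_enumerated_output:
  assumes en: "bij_betw en {..<w} S" and "w \<le> N"
    and hidden_eq: "\<And>x j. hidden W0 b0 W bb N x l j = (if j < w then en j x else 0)"
    and output_layer: "\<phi> \<in> affine_combs S"
  shows "\<phi> \<in> H_net N (Suc l)"
proof -
  obtain c e where c: "\<forall>x. \<phi> x = (\<Sum>g\<in>S. c g * g x) + e"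
    using output_layer unfolding affine_combs_def by blast
  define wL where "wL i = (if i < w then c (en i) else 0)" for i
  have "\<phi> x = (\<Sum>i<N. wL i * hidden W0 b0 W bb N x l i) + e" for x
  proof -
    have "(\<Sum>i<N. wL i * hidden W0 b0 W bb N x l i) = (\<Sum>i<N. if i < w then c (en i) * en i x else 0)"
      by (intro sum.cong) (simp_all add: wL_def hidden_eq)
    also have "\<dots> = (\<Sum>i\<in>{i\<in>{..<N}. i < w}. c (en i) * en i x)"
      by (rule sum.inter_filter[symmetric]) simp
    also have "{i\<in>{..<N}. i < w} = {..<w}"
      using \<open>w \<le> N\<close> by auto
    finally show ?thesis
      using c sum.reindex_bij_betw[OF en, of "\<lambda>g. c g * g x"] by simp
  qed
  then have "\<phi> = (\<lambda>x. (\<Sum>i<N. wL i * hidden W0 b0 W bb N x l i) + e)" ..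
  then show ?thesis
    unfolding H_net_def diff_Suc_1 by blast
qed

lemma H_net_of_layers:
  fixes Ls :: "nat \<Rightarrow> (real^'n::finite \<Rightarrow> real) set"
  assumes layers: "\<And>k. k < L \<Longrightarrow> finite (Ls k) \<and> card (Ls k) \<le> N" and "0 < L"
    and input_layer: "Ls 0 \<subseteq> neurons_over (range (\<lambda>i x. x $ i))"
    and hidden_layers: "\<And>k. Suc k < L \<Longrightarrow> Ls (Suc k) \<subseteq> neurons_over (Ls k)"
    and output_layer: "\<phi> \<in> affine_combs (Ls (L - 1))"
  shows "\<phi> \<in> H_net N L"
proof -
  define w where "w k = card (Ls k)" for k
  have "\<exists>e. bij_betw e {..<w k} (Ls k)" if "k < L" for k
    using ex_bij_betw_nat_finite[of "Ls k"] layers[OF that] by (simp add: w_def atLeast0LessThan)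
  then obtain en where en: "\<And>k. k < L \<Longrightarrow> bij_betw (en k) {..<w k} (Ls k)"
    by metis
  define Prev where "Prev k = (if k = 0 then range (\<lambda>i x. x $ i) else Ls (k - 1))" for k
  have prev: "Ls k \<subseteq> neurons_over (Prev k)" if "k < L" for k
    using that input_layer hidden_layers by (cases k) (simp_all add: Prev_def)
  obtain C E where C: "\<And>k g x. k < L \<Longrightarrow> g \<in> Ls k \<Longrightarrow> g x = euaf ((\<Sum>g'\<in>Prev k. C k g g' * g' x) + E k g)"
    using neurons_over_coefficients[of "\<lambda>k. k < L" Ls Prev, OF prev] by blast
  define W0 where "W0 j i = (if j < w 0 then C 0 (en 0 j) (\<lambda>x. x $ i) else 0)" for j i
  define b0 where "b0 j = (if j < w 0 then E 0 (en 0 j) else 0)" for j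
  define W where "W k j i = (if j < w k then C k (en k j) (en (k - 1) i) else 0)" for k j i
  define bb where "bb k j = (if j < w k then E k (en k j) else 0)" for k j
  have member: "k < L \<Longrightarrow> j < w k \<Longrightarrow> en k j \<in> Ls k" for k j
    using en by (auto dest: bij_betwE)
  have hidden_eq: "hidden W0 b0 W bb N x k j = (if j < w k then en k j x else 0)" if "k < L" for k j x
  proof (rule hidden_eq_enumerated_layers[OF _ _ _ _ _ that])
    show "en 0 j = (\<lambda>x. euaf ((\<Sum>i\<in>UNIV. W0 j i * x $ i) + b0 j))" if "j < w 0" for j
      using C[OF \<open>0 < L\<close> member[OF \<open>0 < L\<close> that]] that
      by (simp add: fun_eq_iff W0_def b0_def Prev_def sum_coordinates)
    show "en (Suc k) j = (\<lambda>x. euaf ((\<Sum>i<w k. W (Suc k) j i * en k i x) + bb (Suc k) j))"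
      if "Suc k < L" "j < w (Suc k)" for k j
    proof
      fix x
      have "(\<Sum>g'\<in>Ls k. C (Suc k) (en (Suc k) j) g' * g' x) = (\<Sum>i<w k. W (Suc k) j i * en k i x)"
        using that(2) sum.reindex_bij_betw[OF en[OF Suc_lessD[OF that(1)]], symmetric]
        by (simp add: W_def)
      then show "en (Suc k) j x = euaf ((\<Sum>i<w k. W (Suc k) j i * en k i x) + bb (Suc k) j)"
        using C[OF that(1) member[OF that]] that(2) by (simp add: Prev_def bb_def)
    qed
    show "w k \<le> N" if "k < L" for k
      using layers[OF that] by (simp add: w_def)
    show "W0 j i = 0 \<and> b0 j = 0" if "w 0 \<le> j" for j i
      using that by (simp add: W0_def b0_def)
    show "W (Suc k) j i = 0 \<and> bb (Suc k) j = 0" if "w (Suc k) \<le> j" for k j i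
      using that by (simp add: W_def bb_def)
  qed
  have last: "L - 1 < L"
    using \<open>0 < L\<close> by simp
  have "\<phi> \<in> H_net N (Suc (L - 1))"
    by (rule H_net_of_enumerated_output[OF en[OF last] _ hidden_eq[OF last] output_layer])
      (use layers[OF last] in \<open>simp add: w_def\<close>)
  then show ?thesis
    using \<open>0 < L\<close> by simp
qed

lemma H_net_affine_output:
  assumes "\<phi> \<in> H_net N L"
  shows "(\<lambda>x. \<alpha> * \<phi> x + \<beta>) \<in> H_net N L"
proof -
  obtain W0 b0 W bb wL cL where "\<phi> = (\<lambda>x. (\<Sum>i<N. wL i * hidden W0 b0 W bb N x (L - 1) i) + cL)"
    using assms unfolding H_net_def by blast
  then have "(\<lambda>x. \<alpha> * \<phi> x + \<beta>)
      = (\<lambda>x. (\<Sum>i<N. (\<alpha> * wL i) * hidden W0 b0 W bb N x (L - 1) i) + (\<alpha> * cL + \<beta>))"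
    by (simp add: distrib_left sum_distrib_left mult.assoc add.assoc)
  then show ?thesis
    unfolding H_net_def
    by (intro CollectI exI[of _ W0] exI[of _ b0] exI[of _ W] exI[of _ bb]
        exI[of _ "\<lambda>i. \<alpha> * wL i"] exI[of _ "\<alpha> * cL + \<beta>"])
qed

section \<open>Rationally independent reciprocals\<close>

lemma int_independent_if_combinations_nonzero:
  fixes \<theta> :: "nat \<Rightarrow> real"
  assumes inj: "inj_on \<theta> {..<M}"
    and nonzero: "\<And>q. \<exists>n<M. q n \<noteq> 0 \<Longrightarrow> (\<Sum>n<M. of_int (q n) * \<theta> n) \<noteq> 0"
  shows "module.independent (\<lambda>r. (*) (real_of_int r)) (\<theta> ` {..<M})"
proof -
  interpret m: Modules.module "\<lambda>r. (*) (real_of_int r)"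
    by (simp add: Modules.module.intro distrib_left mult.commute)
  show ?thesis
  proof
    assume "m.dependent (\<theta> ` {..<M})"
    then obtain t u where t: "finite t" "t \<subseteq> \<theta> ` {..<M}" "(\<Sum>v\<in>t. of_int (u v) * v) = 0"
      and "\<exists>v\<in>t. u v \<noteq> 0"
      unfolding m.dependent_explicit by blast
    define I where "I = {n\<in>{..<M}. \<theta> n \<in> t}"
    define q where "q n = (if n \<in> I then u (\<theta> n) else 0)" for n
    have inj_I: "inj_on \<theta> I"
      using inj by (rule inj_on_subset) (auto simp: I_def)
    have "(\<Sum>n<M. of_int (q n) * \<theta> n) = (\<Sum>n\<in>I. of_int (q n) * \<theta> n)"
      by (rule sum.mono_neutral_right) (auto simp: I_def q_def)
    also have "\<dots> = (\<Sum>n\<in>I. of_int (u (\<theta> n)) * \<theta> n)"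
      by (intro sum.cong) (auto simp: q_def)
    also have "\<dots> = (\<Sum>v\<in>\<theta> ` I. of_int (u v) * v)"
      using inj_I by (simp add: sum.reindex)
    also have "\<theta> ` I = t"
      using t(2) unfolding I_def by auto
    finally have "(\<Sum>n<M. of_int (q n) * \<theta> n) = (\<Sum>v\<in>t. of_int (u v) * v)" .
    moreover have "\<exists>n<M. q n \<noteq> 0"
      using \<open>\<exists>v\<in>t. u v \<noteq> 0\<close> t(2) by (auto simp: q_def I_def)
    ultimately show False
      using nonzero t(3) by simp
  qed
qed

text \<open>Clearing the denominators of \<open>\<Sum>n<M. xs ! n / (c + n)\<close> gives this polynomial in \<open>c\<close>.\<close>

definition reciprocal_numerator :: "nat \<Rightarrow> int list \<Rightarrow> real poly" where
  "reciprocal_numerator M xs = (\<Sum>n<M. smult (of_int (xs ! n)) (\<Prod>k\<in>{..<M} - {n}. [:of_nat k, 1:]))"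

lemma poly_reciprocal_numerator:
  "poly (reciprocal_numerator M xs) c = (\<Sum>n<M. of_int (xs ! n) * (\<Prod>k\<in>{..<M} - {n}. c + of_nat k))"
  by (simp add: reciprocal_numerator_def poly_sum poly_prod add.commute)

lemma reciprocal_numerator_nonzero:
  assumes "n0 < M" "xs ! n0 \<noteq> 0"
  shows "reciprocal_numerator M xs \<noteq> 0"
proof
  assume "reciprocal_numerator M xs = 0"
  then have "0 = poly (reciprocal_numerator M xs) (- of_nat n0)"
    by simp
  also have "\<dots> = (\<Sum>n\<in>{n0}. of_int (xs ! n) * (\<Prod>k\<in>{..<M} - {n}. - of_nat n0 + of_nat k))"
    unfolding poly_reciprocal_numerator
    by (rule sum.mono_neutral_right) (use assms(1) in \<open>auto intro: prod_zero\<close>)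
  finally show False
    using assms(2) by simp
qed

lemma reciprocal_sum_eq_poly:
  assumes "0 < c"
  shows "(\<Sum>n<M. of_int (xs ! n) / (c + of_nat n)) * (\<Prod>k<M. c + of_nat k)
    = poly (reciprocal_numerator M xs) c"
proof -
  have "of_int (xs ! n) / (c + of_nat n) * (\<Prod>k<M. c + of_nat k)
      = of_int (xs ! n) * (\<Prod>k\<in>{..<M} - {n}. c + of_nat k)" if "n < M" for n
    using assms that by (simp add: prod.remove[of "{..<M}" n])
  then show ?thesis
    by (simp add: sum_distrib_right poly_reciprocal_numerator)
qed

text \<open>All but countably many \<open>c\<close> avoid the roots of every nonzero \<open>reciprocal_numerator M xs\<close>.\<close>

lemma reciprocal_shifts_independent:
  fixes C0 :: real
  assumes "0 \<le> C0"
  obtains c where "C0 < c"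
    "module.independent (\<lambda>r. (*) (real_of_int r)) ((\<lambda>n. 1 / (of_nat n + c)) ` {..<M})"
    "inj_on (\<lambda>n. 1 / (of_nat n + c)) {..<M}"
proof -
  define B where "B = (\<Union>xs\<in>{xs. reciprocal_numerator M xs \<noteq> 0}. {c. poly (reciprocal_numerator M xs) c = 0})"
  have "countable B"
    unfolding B_def by (intro countable_UN) (auto intro: countable_finite poly_roots_finite)
  then have "\<not> {C0<..<C0 + 1} \<subseteq> B"
    using uncountable_open_interval countable_subset by (metis less_add_one)
  then obtain c where c: "C0 < c" "c \<notin> B"
    by (auto simp: subset_iff)
  have "(\<Sum>n<M. of_int (q n) * (1 / (of_nat n + c))) \<noteq> 0" if q_nonzero: "\<exists>n<M. q n \<noteq> 0" for q
  proof
    assume sum_zero: "(\<Sum>n<M. of_int (q n) * (1 / (of_nat n + c))) = 0"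
    define xs where "xs = map q [0..<M]"
    obtain n0 where "n0 < M" "xs ! n0 \<noteq> 0"
      using q_nonzero by (auto simp: xs_def)
    then have "poly (reciprocal_numerator M xs) c \<noteq> 0"
      using c(2) reciprocal_numerator_nonzero unfolding B_def by blast
    moreover have "(\<Sum>n<M. of_int (xs ! n) / (c + of_nat n)) = 0"
      using sum_zero by (simp add: xs_def add.commute)
    ultimately show False
      using reciprocal_sum_eq_poly[of c xs M] c(1) assms by simp
  qed
  moreover have "inj_on (\<lambda>n. 1 / (of_nat n + c)) {..<M}"
    using c(1) assms by (auto simp: inj_on_def)
  ultimately show ?thesis
    using that c(1) int_independent_if_combinations_nonzero by blast
qed

section \<open>Shifted grids on the cube\<close>

text \<open>For \<open>s = 0, \<dots>, d\<close> the grid \<open>s\<close> of mesh \<open>(b - a)/K\<close> is shifted by \<open>s/(d + 1)\<close> of a mesh;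
  the cell of \<open>x\<close> in coordinate \<open>i\<close> is the \<open>m\<close> with \<open>grid_coord s i x\<close> within 1 of \<open>2m\<close>,
  and \<open>cell_code\<close> enumerates the cells of all grids in base \<open>K + 2\<close>.\<close>

locale shifted_grids =
  fixes a b :: real and K :: nat and ei :: "nat \<Rightarrow> 'n::finite"
  assumes interval: "a < b" and dim_le_K: "CARD('n) \<le> K"
    and ei: "bij_betw ei {..<CARD('n)} UNIV"
begin

definition cube :: "(real^'n) set" where
  "cube = {x. \<forall>i. x $ i \<in> {a..b}}"

definition grid_coord :: "nat \<Rightarrow> 'n \<Rightarrow> real^'n \<Rightarrow> real" where
  "grid_coord s i x = 2 * real K * (x $ i - a) / (b - a) + 2 * real s / (real CARD('n) + 1)"

definition cell_index :: "nat \<Rightarrow> 'n \<Rightarrow> real^'n \<Rightarrow> int" where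
  "cell_index s i x = \<lfloor>(grid_coord s i x + 1) / 2\<rfloor>"

definition base :: nat where
  "base = K + 2"

definition cell_digit :: "nat \<Rightarrow> real^'n \<Rightarrow> nat \<Rightarrow> nat" where
  "cell_digit s x j = (if j < CARD('n) then nat (cell_index s (ei j) x) else s)"

definition cell_code :: "nat \<Rightarrow> real^'n \<Rightarrow> nat" where
  "cell_code s x = (\<Sum>j<Suc CARD('n). cell_digit s x j * base ^ j)"

definition margin :: real where
  "margin = 1 / (4 * (real CARD('n) + 1))"

definition boundary_weight :: "nat \<Rightarrow> 'n \<Rightarrow> real^'n \<Rightarrow> real" where
  "boundary_weight s i x = max 0 (sigma1 (grid_coord s i x) - 1 + 2 * margin) / margin"

definition shift_weight :: "nat \<Rightarrow> real^'n \<Rightarrow> real" where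
  "shift_weight s x = max 0 (1 - (\<Sum>i\<in>UNIV. boundary_weight s i x))"

definition code_estimate :: "nat \<Rightarrow> real^'n \<Rightarrow> real" where
  "code_estimate s x = (\<Sum>j<CARD('n). floor_estimate margin (grid_coord s (ei j) x) / 2 * real base ^ j)
    + real s * real base ^ CARD('n)"

lemma K_pos: "0 < K"
proof -
  have "0 < CARD('n)"
    by simp
  with dim_le_K show ?thesis
    by linarith
qed

lemma margin_pos: "0 < margin"
  by (simp add: margin_def)

lemma margin_le: "margin \<le> 1/8"
  by (simp add: margin_def field_simps)

lemma grid_coord_bounds:
  assumes "x \<in> cube" "s \<le> CARD('n)"
  shows "0 \<le> grid_coord s i x" "grid_coord s i x < 2 * real K + 2"
proof -
  have u: "0 \<le> (x $ i - a) / (b - a)" "(x $ i - a) / (b - a) \<le> 1"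
    using assms(1) interval by (auto simp: cube_def field_simps)
  have "2 * real s / (real CARD('n) + 1) < 2"
    using assms(2) by (simp add: field_simps)
  moreover have "2 * real K * ((x $ i - a) / (b - a)) \<le> 2 * real K"
    using mult_left_le[OF u(2), of "2 * real K"] by simp
  moreover have "0 \<le> 2 * real K * ((x $ i - a) / (b - a))"
    using u(1) by (intro mult_nonneg_nonneg) simp_all
  ultimately show "0 \<le> grid_coord s i x" "grid_coord s i x < 2 * real K + 2"
    by (simp_all add: grid_coord_def)
qed

lemma cell_index_bounds:
  assumes "x \<in> cube" "s \<le> CARD('n)"
  shows "0 \<le> cell_index s i x" "cell_index s i x < int base"
proof -
  note bounds = grid_coord_bounds[OF assms, of i]
  then show "0 \<le> cell_index s i x"
    by (simp add: cell_index_def)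
  have "(grid_coord s i x + 1) / 2 < real K + 2"
    using bounds by simp
  then show "cell_index s i x < int base"
    unfolding cell_index_def base_def by linarith
qed

lemma grid_coord_near_cell: "\<bar>grid_coord s i x - 2 * of_int (cell_index s i x)\<bar> \<le> 1"
  using even_remainder_bounds[of "grid_coord s i x"] by (simp add: cell_index_def)

lemma boundary_weight_nonneg: "0 \<le> boundary_weight s i x"
  using margin_pos by (simp add: boundary_weight_def)

lemma boundary_weight_le_two: "boundary_weight s i x \<le> 2"
  using margin_pos sigma1_le_one[of "grid_coord s i x"]
  by (simp add: boundary_weight_def pos_divide_le_eq)

lemma boundary_weight_pos_iff: "0 < boundary_weight s i x \<longleftrightarrow> 1 - 2 * margin < sigma1 (grid_coord s i x)"
  using margin_pos by (auto simp: boundary_weight_def zero_less_divide_iff less_max_iff_disj)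

lemma shift_weight_bounds: "0 \<le> shift_weight s x" "shift_weight s x \<le> 1"
  using boundary_weight_nonneg by (auto simp: shift_weight_def intro: sum_nonneg)

text \<open>Two shifts differ by a fraction \<open>2(s - s')/(d + 1)\<close> that is far from the even integers, whereas
  two points near odd integers differ by almost an even integer.\<close>

lemma boundary_shift_unique:
  assumes "s \<le> CARD('n)" "s' \<le> CARD('n)" "0 < boundary_weight s i x" "0 < boundary_weight s' i x"
  shows "s = s'"
proof (rule ccontr)
  assume "s \<noteq> s'"
  define D where "D = int CARD('n) + 1"
  define q where "q = int s - int s'"
  have "\<not> D dvd q"
  proof
    assume "D dvd q"
    moreover have "\<bar>q\<bar> < D" "q \<noteq> 0"
      using assms(1,2) \<open>s \<noteq> s'\<close> by (auto simp: D_def q_def)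
    ultimately show False
      using dvd_imp_le_int by force
  qed
  moreover have "8 * margin = 2 / of_int D"
    by (simp add: D_def margin_def field_simps)
  ultimately have "8 * margin \<le> sigma1 (2 * of_int q / of_int D)"
    using sigma1_fraction_ge[of D q] by (simp add: D_def)
  also have "2 * of_int q / of_int D = (grid_coord s i x + 1) - (grid_coord s' i x + 1)"
    by (simp add: D_def q_def grid_coord_def diff_divide_distrib)
  also have "sigma1 \<dots> \<le> sigma1 (grid_coord s i x + 1) + sigma1 (grid_coord s' i x + 1)"
    by (rule sigma1_diff_le)
  also have "\<dots> < 4 * margin"
    using assms(3,4) by (simp add: boundary_weight_pos_iff sigma1_shift_one)
  finally show False
    using margin_pos by simp
qed

lemma exists_clean_shift: "\<exists>s\<le>CARD('n). \<forall>i. boundary_weight s i x = 0"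
proof -
  define B where "B i = {s\<in>{..CARD('n)}. 0 < boundary_weight s i x}" for i
  have "card (B i) \<le> 1" for i
    using boundary_shift_unique by (auto simp: B_def card_le_Suc0_iff_eq)
  then have "card (\<Union>i. B i) \<le> CARD('n)"
    using card_UN_le[of UNIV B] sum_bounded_above[of UNIV "\<lambda>i. card (B i)" 1] by simp
  then have "\<not> {..CARD('n)} \<subseteq> (\<Union>i. B i)"
    using card_mono[of "\<Union>i. B i" "{..CARD('n)}"] by (auto simp: B_def)
  then obtain s where s: "s \<le> CARD('n)" "\<forall>i. s \<notin> B i"
    by auto
  have "boundary_weight s i x = 0" for i
  proof -
    have "\<not> 0 < boundary_weight s i x"
      using s by (auto simp: B_def)
    with boundary_weight_nonneg[of s i x] show ?thesis
      by linarith
  qed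
  with s(1) show ?thesis
    by blast
qed

lemma sum_shift_weight_le: "(\<Sum>s\<le>CARD('n). shift_weight s x) \<le> real CARD('n) + 1"
  using sum_mono[of "{..CARD('n)}" "\<lambda>s. shift_weight s x" "\<lambda>_. 1"] shift_weight_bounds by simp

lemma sum_shift_weight_ge_one: "1 \<le> (\<Sum>s\<le>CARD('n). shift_weight s x)"
proof -
  obtain s where s: "s \<le> CARD('n)" "\<forall>i. boundary_weight s i x = 0"
    using exists_clean_shift by blast
  then have "shift_weight s x = 1"
    by (simp add: shift_weight_def)
  moreover have "shift_weight s x \<le> (\<Sum>s\<le>CARD('n). shift_weight s x)"
    using s(1) shift_weight_bounds by (intro member_le_sum) auto
  ultimately show ?thesis
    by simp
qed

lemma floor_estimate_grid_coord:
  assumes "0 < shift_weight s x"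
  shows "floor_estimate margin (grid_coord s i x) = 2 * of_int (cell_index s i x)"
proof -
  have "boundary_weight s i x \<le> (\<Sum>i\<in>UNIV. boundary_weight s i x)"
    using boundary_weight_nonneg by (intro member_le_sum) auto
  also have "\<dots> < 1"
    using assms by (simp add: shift_weight_def)
  finally have "sigma1 (grid_coord s i x) < 1 - margin"
    using margin_pos by (simp add: boundary_weight_def)
  also have "1 - margin \<le> 1 / (1 + margin)"
    using margin_pos by (simp add: field_simps)
  finally show ?thesis
    using margin_pos margin_le by (simp add: floor_estimate_eq cell_index_def)
qed

lemma code_estimate_eq_cell_code:
  assumes "x \<in> cube" "s \<le> CARD('n)" "0 < shift_weight s x"
  shows "code_estimate s x = real (cell_code s x)"
  using cell_index_bounds(1)[OF assms(1,2)]
  by (simp add: code_estimate_def cell_code_def cell_digit_def floor_estimate_grid_coord[OF assms(3)])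

lemma code_estimate_ge:
  assumes "x \<in> cube" "s \<le> CARD('n)"
  shows "- real (CARD('n) * base ^ CARD('n)) \<le> code_estimate s x"
proof -
  have "- (real base ^ CARD('n)) \<le> floor_estimate margin (grid_coord s (ei j) x) / 2 * real base ^ j"
    if "j < CARD('n)" for j
  proof -
    have "real base ^ j \<le> real base ^ CARD('n)"
      using that by (intro power_increasing) (auto simp: base_def)
    then have "- (real base ^ CARD('n)) \<le> -1 * real base ^ j"
      by simp
    also have "\<dots> \<le> floor_estimate margin (grid_coord s (ei j) x) / 2 * real base ^ j"
      using floor_estimate_ge[OF grid_coord_bounds(1)[OF assms, of "ei j"] margin_pos]
      by (intro mult_right_mono) simp_all
    finally show ?thesis .
  qed
  then have "- real (CARD('n) * base ^ CARD('n))
      \<le> (\<Sum>j<CARD('n). floor_estimate margin (grid_coord s (ei j) x) / 2 * real base ^ j)"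
    using sum_mono[of "{..<CARD('n)}" "\<lambda>_. - (real base ^ CARD('n))"] by simp
  then show ?thesis
    unfolding code_estimate_def by (intro add_increasing2) simp_all
qed

lemma cell_digit_less: "x \<in> cube \<Longrightarrow> s \<le> CARD('n) \<Longrightarrow> cell_digit s x j < base"
  using cell_index_bounds[of x s "ei j"] dim_le_K by (auto simp: cell_digit_def base_def)

lemma cell_code_less: "x \<in> cube \<Longrightarrow> s \<le> CARD('n) \<Longrightarrow> cell_code s x < base ^ Suc CARD('n)"
  unfolding cell_code_def by (intro sum_digits_less) (simp add: cell_digit_less)

lemma cell_code_eq_imp_close:
  assumes "x \<in> cube" "x' \<in> cube" "s \<le> CARD('n)" "s' \<le> CARD('n)" "cell_code s x = cell_code s' x'"
  shows "\<bar>x $ i - x' $ i\<bar> \<le> (b - a) / real K"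
proof -
  have digits: "\<forall>j<Suc CARD('n). cell_digit s x j = cell_digit s' x' j"
    using assms by (intro sum_digits_inj[of _ _ base]) (simp_all add: cell_digit_less cell_code_def)
  then have "s = s'"
    by (auto simp: cell_digit_def)
  have "i \<in> ei ` {..<CARD('n)}"
    using ei by (simp add: bij_betw_def)
  then obtain j where j: "j < CARD('n)" "ei j = i"
    by auto
  then have "nat (cell_index s i x) = nat (cell_index s i x')"
    using digits[rule_format, of j] j \<open>s = s'\<close> by (simp add: cell_digit_def)
  then have "cell_index s i x = cell_index s i x'"
    using eq_nat_nat_iff[OF cell_index_bounds(1)[OF assms(1,3)] cell_index_bounds(1)[OF assms(2,3)]]
    by simp
  then have "\<bar>grid_coord s i x - grid_coord s i x'\<bar> \<le> 2"
    using grid_coord_near_cell[of s i x] grid_coord_near_cell[of s i x'] by linarith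
  also have "grid_coord s i x - grid_coord s i x' = 2 * real K * (x $ i - x' $ i) / (b - a)"
    by (simp add: grid_coord_def diff_divide_distrib algebra_simps)
  also have "\<bar>\<dots>\<bar> = 2 * real K * \<bar>x $ i - x' $ i\<bar> / (b - a)"
    using interval by (simp add: abs_mult abs_div)
  finally have "real K * \<bar>x $ i - x' $ i\<bar> \<le> b - a"
    using interval by (simp add: pos_divide_le_eq)
  then show ?thesis
    using K_pos by (simp add: field_simps)
qed

text \<open>The value of \<open>f\<close> at some point of cell \<open>n\<close> (junk value 0 for codes that occur in no grid).\<close>

definition cell_sample :: "(real^'n \<Rightarrow> real) \<Rightarrow> nat \<Rightarrow> real" where
  "cell_sample f n = (if \<exists>x\<in>cube. \<exists>s\<le>CARD('n). cell_code s x = n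
    then f (SOME x. x \<in> cube \<and> (\<exists>s\<le>CARD('n). cell_code s x = n)) else 0)"

lemma cell_sample_bounds:
  assumes "\<And>x. x \<in> cube \<Longrightarrow> 0 \<le> f x \<and> f x \<le> 1"
  shows "0 \<le> cell_sample f n \<and> cell_sample f n \<le> 1"
  using someI_ex[of "\<lambda>x. x \<in> cube \<and> (\<exists>s\<le>CARD('n). cell_code s x = n)"] assms
  by (auto simp: cell_sample_def)

lemma cell_sample_close:
  assumes modulus: "\<And>x x'. x \<in> cube \<Longrightarrow> x' \<in> cube \<Longrightarrow> (\<forall>i. \<bar>x $ i - x' $ i\<bar> \<le> (b - a) / real K)
      \<Longrightarrow> \<bar>f x - f x'\<bar> \<le> \<omega>"
    and "x \<in> cube" "s \<le> CARD('n)"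
  shows "\<bar>cell_sample f (cell_code s x) - f x\<bar> \<le> \<omega>"
proof -
  define n where "n = cell_code s x"
  have "\<exists>x'. x' \<in> cube \<and> (\<exists>s'\<le>CARD('n). cell_code s' x' = n)"
    using assms(2,3) n_def by blast
  from someI_ex[OF this] obtain s' where
    "(SOME x'. x' \<in> cube \<and> (\<exists>s'\<le>CARD('n). cell_code s' x' = n)) \<in> cube" "s' \<le> CARD('n)"
    "cell_code s' (SOME x'. x' \<in> cube \<and> (\<exists>s'\<le>CARD('n). cell_code s' x' = n)) = n"
    by blast
  then show ?thesis
    using assms cell_code_eq_imp_close[of _ x s' s] unfolding n_def cell_sample_def by auto
qed

end

section \<open>The network\<close>

text \<open>Layer 1 evaluates \<open>sigma1\<close> at the grid coordinates; layers 2 and 3 assemble \<open>floor_estimate\<close> and the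
  shift weights from ReLU pairs; layer 4 maps the cell code \<open>n\<close> to \<open>1/(n + c) - 1\<close> and layer 5 to the
  wave \<open>sigma1 (2t/(n + c))\<close>, the offset \<open>2k \<ge> 2\<bar>t\<bar>\<close> keeping the argument in the range where
  \<open>euaf = sigma1\<close>; layers 6 and 7 form the weighted average of the waves by approximate products.\<close>

locale euaf_network = shifted_grids a b K ei for a b :: real and K :: nat and ei :: "nat \<Rightarrow> 'n::finite" +
  fixes c t h :: real and k :: int
  assumes c_large: "1 + real (CARD('n) * (K + 2) ^ CARD('n)) < c"
    and wave_offset: "\<bar>t\<bar> \<le> of_int k"
    and h_pos: "0 < h" and h_le: "h \<le> 1/6" and h_small: "28 * (real CARD('n) + 1) * h^2 \<le> 1"
begin

definition shift_coords :: "(nat \<times> 'n) set" where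
  "shift_coords = {..CARD('n)} \<times> UNIV"

definition tri :: "nat \<Rightarrow> 'n \<Rightarrow> real^'n \<Rightarrow> real" where
  "tri s i = relay (grid_coord s i)"

definition tri_half :: "nat \<Rightarrow> 'n \<Rightarrow> real^'n \<Rightarrow> real" where
  "tri_half s i = relay (\<lambda>x. grid_coord s i x + 1/2)"

definition coord :: "nat \<Rightarrow> 'n \<Rightarrow> real^'n \<Rightarrow> real" where
  "coord s i = relay (\<lambda>x. grid_coord s i x / (2 * real K + 2))"

definition layer1 :: "(real^'n \<Rightarrow> real) set" where
  "layer1 = (\<Union>(s, i)\<in>shift_coords. {tri s i, tri_half s i, coord s i})"

definition dip :: "nat \<Rightarrow> 'n \<Rightarrow> real^'n \<Rightarrow> real" where
  "dip s i x = 1/2 - tri_half s i x"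

definition ridge :: "nat \<Rightarrow> 'n \<Rightarrow> real^'n \<Rightarrow> real" where
  "ridge s i x = tri s i x - 1 + 2 * margin"

definition layer2 :: "(real^'n \<Rightarrow> real) set" where
  "layer2 = (\<Union>(s, i)\<in>shift_coords.
     relu_neurons (dip s i) \<union> relu_neurons (ridge s i) \<union> {relay (tri s i), relay (coord s i)})"

definition sign_fix :: "nat \<Rightarrow> 'n \<Rightarrow> real^'n \<Rightarrow> real" where
  "sign_fix s i x = margin * relay (tri s i) x - euaf_relu (dip s i x)"

definition weight_arg :: "nat \<Rightarrow> real^'n \<Rightarrow> real" where
  "weight_arg s x = (1 - (\<Sum>i\<in>UNIV. euaf_relu (ridge s i x) / margin)) / (2 * real CARD('n) + 1)"

definition layer3 :: "(real^'n \<Rightarrow> real) set" where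
  "layer3 = (\<Union>(s, i)\<in>shift_coords.
       relu_neurons (sign_fix s i) \<union> {relay (relay (tri s i)), relay (relay (coord s i))})
     \<union> (\<Union>s\<le>CARD('n). relu_neurons (weight_arg s))"

definition floor_net :: "nat \<Rightarrow> 'n \<Rightarrow> real^'n \<Rightarrow> real" where
  "floor_net s i x = (2 * real K + 2) * relay (relay (coord s i)) x + relay (relay (tri s i)) x
     - 2 / margin * euaf_relu (sign_fix s i x)"

definition code_net :: "nat \<Rightarrow> real^'n \<Rightarrow> real" where
  "code_net s x = (\<Sum>j<CARD('n). floor_net s (ei j) x / 2 * real base ^ j) + real s * real base ^ CARD('n)"

definition weight_net :: "nat \<Rightarrow> real^'n \<Rightarrow> real" where
  "weight_net s x = (2 * real CARD('n) + 1) * euaf_relu (weight_arg s x)"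

definition recip :: "nat \<Rightarrow> real^'n \<Rightarrow> real" where
  "recip s = relay (\<lambda>x. 1 - code_net s x - c)"

definition layer4 :: "(real^'n \<Rightarrow> real) set" where
  "layer4 = (\<Union>s\<le>CARD('n). {recip s, relay (weight_net s)})"

definition wave :: "nat \<Rightarrow> real^'n \<Rightarrow> real" where
  "wave s = relay (\<lambda>x. 2 * t * (recip s x + 1) + 2 * of_int k)"

definition layer5 :: "(real^'n \<Rightarrow> real) set" where
  "layer5 = (\<Union>s\<le>CARD('n). {wave s, relay (relay (weight_net s))})"

definition total_recip :: "real^'n \<Rightarrow> real" where
  "total_recip = relay (\<lambda>x. 1 - (\<Sum>s\<le>CARD('n). relay (relay (weight_net s)) x))"

definition layer6 :: "(real^'n \<Rightarrow> real) set" where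
  "layer6 = (\<Union>s\<le>CARD('n). mult_neurons h (relay (relay (weight_net s))) (wave s)) \<union> {total_recip}"

definition average :: "real^'n \<Rightarrow> real" where
  "average x = (\<Sum>s\<le>CARD('n). euaf_mult h (relay (relay (weight_net s)) x) (wave s x)) / (real CARD('n) + 1)"

definition layer7 :: "(real^'n \<Rightarrow> real) set" where
  "layer7 = mult_neurons h average (\<lambda>x. total_recip x + 1)"

definition net_value :: "real^'n \<Rightarrow> real" where
  "net_value x = (real CARD('n) + 1) * euaf_mult h (average x) (total_recip x + 1)"

text \<open>Layers 8 to 11 only relay \<open>(net_value + 1) / 3 \<in> [0, 1]\<close>, padding the depth to 11.\<close>

definition layers :: "nat \<Rightarrow> (real^'n \<Rightarrow> real) set" where
  "layers n = (if n < 7 then [layer1, layer2, layer3, layer4, layer5, layer6, layer7] ! n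
     else {(relay ^^ (n - 6)) (\<lambda>x. (net_value x + 1) / 3)})"

definition network :: "real^'n \<Rightarrow> real" where
  "network x = 3 * (relay ^^ 4) (\<lambda>x. (net_value x + 1) / 3) x - 1"

lemma finite_layers: "finite (layers n)"
  by (simp add: layers_def nth_Cons' layer1_def layer2_def layer3_def layer4_def layer5_def
      layer6_def layer7_def shift_coords_def relu_neurons_def mult_neurons_def square_neurons_def)

lemma card_layers: "card (layers n) \<le> 6 * (CARD('n) + 1) * (CARD('n) + 1)"
proof -
  define d where "d = CARD('n)"
  have card_shift_coords: "card shift_coords = (d + 1) * d"
    by (simp add: shift_coords_def d_def card_cartesian_product)
  have two: "card {f, g} \<le> 2" for f g :: "real^'n \<Rightarrow> real"
    by (simp add: card_insert_if)
  have shifted: "card (\<Union>s\<le>d. A s) \<le> (d + 1) * m" if "\<And>s. card (A s) \<le> m" for A m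
    using card_UN_le_mult[of "{..d}" A m] that by simp
  have coords: "card (\<Union>(s, i)\<in>shift_coords. A s i) \<le> (d + 1) * d * m" if "\<And>s i. card (A s i) \<le> m" for A m
    using card_UN_le_mult[of shift_coords "\<lambda>(s, i). A s i" m] that card_shift_coords
    by (simp add: shift_coords_def split_def)
  have union: "card (A \<union> B) \<le> r" if "card A \<le> p" "card B \<le> q" "p + q \<le> r"
    for A B :: "(real^'n \<Rightarrow> real) set" and p q r
    using card_Un_le[of A B] that by linarith
  have "card layer1 \<le> (d + 1) * d * 3"
    unfolding layer1_def d_def[symmetric] by (intro coords) (simp add: card_insert_if)
  moreover have "card layer2 \<le> (d + 1) * d * 6"
    unfolding layer2_def d_def[symmetric]
    by (intro coords union[OF union[OF card_relu_neurons card_relu_neurons, of 4] two]) simp_all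
  moreover have "card layer3 \<le> (d + 1) * d * 4 + (d + 1) * 2"
  proof -
    have "card (\<Union>(s, i)\<in>shift_coords.
        relu_neurons (sign_fix s i) \<union> {relay (relay (tri s i)), relay (relay (coord s i))}) \<le> (d + 1) * d * 4"
      by (intro coords union[OF card_relu_neurons two, of 4]) simp
    moreover have "card (\<Union>s\<le>d. relu_neurons (weight_arg s)) \<le> (d + 1) * 2"
      by (intro shifted card_relu_neurons)
    ultimately show ?thesis
      unfolding layer3_def d_def[symmetric] by (rule union) simp
  qed
  moreover have "card layer4 \<le> (d + 1) * 2" "card layer5 \<le> (d + 1) * 2"
    unfolding layer4_def layer5_def d_def[symmetric] by (intro shifted two)+
  moreover have "card layer6 \<le> (d + 1) * 4 + 1"
    unfolding layer6_def d_def[symmetric]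
    by (rule union[OF shifted[OF card_mult_neurons] order_refl]) simp
  moreover have "card layer7 \<le> 4"
    unfolding layer7_def by (rule card_mult_neurons)
  ultimately show ?thesis
    unfolding d_def[symmetric] by (auto simp: layers_def nth_Cons' algebra_simps)
qed

lemma grid_coord_affine: "grid_coord s i \<in> affine_combs (range (\<lambda>i x. x $ i))"
proof -
  have "(\<lambda>x. x $ i) \<in> affine_combs (range (\<lambda>i x. x $ i))"
    by (rule affine_combs_base) auto
  moreover have "grid_coord s i = (\<lambda>x. 2 * real K * (x $ i - a) / (b - a) + 2 * real s / (real CARD('n) + 1))"
    by (simp add: fun_eq_iff grid_coord_def)
  ultimately show ?thesis
    by (simp only:) (intro affine_combs_intros)
qed

lemma layer1_input: "layer1 \<subseteq> neurons_over (range (\<lambda>i x. x $ i))"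
  unfolding layer1_def tri_def tri_half_def coord_def
  by (auto intro!: relay_over affine_combs_intros grid_coord_affine)

lemma layer1_members: "(s, i) \<in> shift_coords \<Longrightarrow> f \<in> {tri s i, tri_half s i, coord s i} \<Longrightarrow> f \<in> affine_combs layer1"
  using finite_layers[of 0] by (intro affine_combs_base) (auto simp: layers_def layer1_def)

lemma layer2_members:
  assumes "(s, i) \<in> shift_coords"
  shows "relay (tri s i) \<in> affine_combs layer2" "relay (coord s i) \<in> affine_combs layer2"
    "(\<lambda>x. euaf_relu (dip s i x)) \<in> affine_combs layer2" "(\<lambda>x. euaf_relu (ridge s i x)) \<in> affine_combs layer2"
proof -
  have fin: "finite layer2"
    using finite_layers[of 1] by (simp add: layers_def)
  then show "relay (tri s i) \<in> affine_combs layer2" "relay (coord s i) \<in> affine_combs layer2"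
    using assms by (auto intro!: affine_combs_base simp: layer2_def)
  show "(\<lambda>x. euaf_relu (dip s i x)) \<in> affine_combs layer2" "(\<lambda>x. euaf_relu (ridge s i x)) \<in> affine_combs layer2"
    using fin assms by (auto intro!: relu_readout simp: layer2_def)
qed

lemma layer3_members:
  assumes "s \<le> CARD('n)"
  shows "floor_net s i \<in> affine_combs layer3" "weight_net s \<in> affine_combs layer3"
proof -
  have fin: "finite layer3"
    using finite_layers[of 2] by (simp add: layers_def)
  have si: "(s, i) \<in> shift_coords"
    using assms by (simp add: shift_coords_def)
  have "relay (relay (coord s i)) \<in> affine_combs layer3" "relay (relay (tri s i)) \<in> affine_combs layer3"
    "(\<lambda>x. euaf_relu (sign_fix s i x)) \<in> affine_combs layer3"
    using fin si by (auto intro!: affine_combs_base relu_readout simp: layer3_def)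
  then show "floor_net s i \<in> affine_combs layer3"
    unfolding floor_net_def[abs_def] by (intro affine_combs_intros)
  have "(\<lambda>x. euaf_relu (weight_arg s x)) \<in> affine_combs layer3"
    using fin assms by (auto intro!: relu_readout simp: layer3_def)
  then show "weight_net s \<in> affine_combs layer3"
    unfolding weight_net_def[abs_def] by (intro affine_combs_intros)
qed

lemma layer2_over: "layer2 \<subseteq> neurons_over layer1"
proof -
  have "relu_neurons (dip s i) \<union> relu_neurons (ridge s i) \<union> {relay (tri s i), relay (coord s i)}
      \<subseteq> neurons_over layer1" if "(s, i) \<in> shift_coords" for s i
  proof -
    have "tri s i \<in> affine_combs layer1" "tri_half s i \<in> affine_combs layer1" "coord s i \<in> affine_combs layer1"
      using layer1_members[OF that] by auto
    moreover from this have "dip s i \<in> affine_combs layer1" "ridge s i \<in> affine_combs layer1"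
      unfolding dip_def[abs_def] ridge_def[abs_def] by (intro affine_combs_intros; simp)+
    ultimately show ?thesis
      by (simp add: relu_neurons_over relay_over)
  qed
  then show ?thesis
    unfolding layer2_def by blast
qed

lemma layer3_over: "layer3 \<subseteq> neurons_over layer2"
proof -
  have "relu_neurons (sign_fix s i) \<union> {relay (relay (tri s i)), relay (relay (coord s i))}
      \<subseteq> neurons_over layer2" if "(s, i) \<in> shift_coords" for s i
  proof -
    have "sign_fix s i \<in> affine_combs layer2"
      unfolding sign_fix_def[abs_def] using layer2_members[OF that] by (intro affine_combs_intros)
    then show ?thesis
      using layer2_members[OF that] by (simp add: relu_neurons_over relay_over)
  qed
  moreover have "relu_neurons (weight_arg s) \<subseteq> neurons_over layer2" if "s \<le> CARD('n)" for s
  proof -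
    have "(\<lambda>x. \<Sum>i\<in>UNIV. euaf_relu (ridge s i x) / margin) \<in> affine_combs layer2"
      using that by (intro affine_combs_sum affine_combs_divide layer2_members) (auto simp: shift_coords_def)
    then show ?thesis
      unfolding weight_arg_def[abs_def] by (intro relu_neurons_over affine_combs_intros)
  qed
  ultimately show ?thesis
    unfolding layer3_def by blast
qed

lemma layer4_over: "layer4 \<subseteq> neurons_over layer3"
proof -
  have "code_net s \<in> affine_combs layer3" if "s \<le> CARD('n)" for s
    unfolding code_net_def[abs_def] using that
    by (intro affine_combs_intros affine_combs_sum) (auto intro: layer3_members)
  then show ?thesis
    unfolding layer4_def recip_def using layer3_members
    by (auto intro!: relay_over affine_combs_intros)
qed

lemma layer5_over: "layer5 \<subseteq> neurons_over layer4"
proof -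
  have "recip s \<in> affine_combs layer4" "relay (weight_net s) \<in> affine_combs layer4" if "s \<le> CARD('n)" for s
    using that finite_layers[of 3] by (auto intro!: affine_combs_base simp: layers_def layer4_def)
  then show ?thesis
    unfolding layer5_def wave_def by (auto intro!: relay_over affine_combs_intros)
qed

lemma layer6_over: "layer6 \<subseteq> neurons_over layer5"
proof -
  have "wave s \<in> affine_combs layer5" "relay (relay (weight_net s)) \<in> affine_combs layer5"
    if "s \<le> CARD('n)" for s
    using that finite_layers[of 4] by (auto intro!: affine_combs_base simp: layers_def layer5_def)
  then have "mult_neurons h (relay (relay (weight_net s))) (wave s) \<subseteq> neurons_over layer5"
    if "s \<le> CARD('n)" for s
    using that by (intro mult_neurons_over)
  moreover have "(\<lambda>x. 1 - (\<Sum>s\<le>CARD('n). relay (relay (weight_net s)) x)) \<in> affine_combs layer5"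
    using \<open>\<And>s. s \<le> CARD('n) \<Longrightarrow> relay (relay (weight_net s)) \<in> affine_combs layer5\<close>
    by (intro affine_combs_intros affine_combs_sum) auto
  ultimately show ?thesis
    unfolding layer6_def total_recip_def by (simp add: UN_subset_iff relay_over)
qed

lemma layer7_over: "layer7 \<subseteq> neurons_over layer6"
proof -
  have fin: "finite layer6"
    using finite_layers[of 5] by (simp add: layers_def)
  have "(\<lambda>x. euaf_mult h (relay (relay (weight_net s)) x) (wave s x)) \<in> affine_combs layer6"
    if "s \<le> CARD('n)" for s
    using that fin by (intro mult_readout) (auto simp: layer6_def)
  then have "average \<in> affine_combs layer6"
    unfolding average_def[abs_def] by (intro affine_combs_divide affine_combs_sum) auto
  moreover have "total_recip \<in> affine_combs layer6"
    using fin by (intro affine_combs_base) (auto simp: layer6_def)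
  ultimately show ?thesis
    unfolding layer7_def by (intro mult_neurons_over affine_combs_intros)
qed

lemma net_value_affine: "net_value \<in> affine_combs layer7"
  unfolding net_value_def[abs_def] using finite_layers[of 6]
  by (intro affine_combs_cmult mult_readout) (simp_all add: layers_def layer7_def)

lemma layers_step:
  assumes "Suc n < 11"
  shows "layers (Suc n) \<subseteq> neurons_over (layers n)"
proof -
  consider "n < 6" | "n = 6" | "7 \<le> n"
    by linarith
  then show ?thesis
  proof cases
    case 1
    then show ?thesis
      using layer2_over layer3_over layer4_over layer5_over layer6_over layer7_over
      by (auto simp: layers_def less_Suc_eq numeral_eq_Suc)
  next
    case 2
    then show ?thesis
      using net_value_affine by (auto simp: layers_def intro!: relay_over affine_combs_intros)
  next
    case 3
    then have "n - 5 = Suc (n - 6)"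
      by simp
    with 3 have "layers (Suc n) = {relay ((relay ^^ (n - 6)) (\<lambda>x. (net_value x + 1) / 3))}"
      by (simp add: layers_def)
    then show ?thesis
      using 3 by (auto simp: layers_def intro!: relay_over affine_combs_base)
  qed
qed

lemma network_in_H_net: "network \<in> H_net (36 * CARD('n) * (2 * CARD('n) + 1)) 11"
proof (rule H_net_of_layers)
  show "finite (layers n) \<and> card (layers n) \<le> 36 * CARD('n) * (2 * CARD('n) + 1)" for n
  proof -
    have "6 * (d + 1) * (d + 1) \<le> 36 * d * (2 * d + 1)" if "0 < d" for d :: nat
      using that by (cases d) (simp_all add: algebra_simps)
    then have "6 * (CARD('n) + 1) * (CARD('n) + 1) \<le> 36 * CARD('n) * (2 * CARD('n) + 1)"
      by simp
    then show ?thesis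
      using finite_layers card_layers order_trans by blast
  qed
  show "layers 0 \<subseteq> neurons_over (range (\<lambda>i x. x $ i))"
    by (simp add: layers_def layer1_input)
  show "network \<in> affine_combs (layers (11 - 1))"
    unfolding network_def[abs_def]
    by (intro affine_combs_intros affine_combs_base) (simp_all add: layers_def)
qed (use layers_step in auto)


lemma tri_layer_values:
  assumes "x \<in> cube" "s \<le> CARD('n)"
  shows "tri s i x = sigma1 (grid_coord s i x)" "tri_half s i x = sigma1 (grid_coord s i x + 1/2)"
    "relay (coord s i) x = grid_coord s i x / (2 * real K + 2)" "coord s i x = grid_coord s i x / (2 * real K + 2)"
proof -
  note bounds = grid_coord_bounds[OF assms, of i]
  then show "tri s i x = sigma1 (grid_coord s i x)" "tri_half s i x = sigma1 (grid_coord s i x + 1/2)"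
    by (simp_all add: tri_def tri_half_def relay_def euaf_nonneg_eq)
  have "0 \<le> grid_coord s i x / (2 * real K + 2)" "grid_coord s i x / (2 * real K + 2) \<le> 1"
    using bounds by simp_all
  then show "coord s i x = grid_coord s i x / (2 * real K + 2)"
    "relay (coord s i) x = grid_coord s i x / (2 * real K + 2)"
    by (simp_all add: coord_def relay_id)
qed

lemma floor_net_eq:
  assumes "x \<in> cube" "s \<le> CARD('n)"
  shows "floor_net s i x = floor_estimate margin (grid_coord s i x)"
proof -
  define v where "v = sigma1 (grid_coord s i x)"
  define M where "M = max 0 (1/2 - sigma1 (grid_coord s i x + 1/2))"
  note layer_vals = tri_layer_values[OF assms, of i]
  have v: "0 \<le> v" "v \<le> 1"
    using sigma1_nonneg sigma1_le_one by (auto simp: v_def)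
  have "0 \<le> sigma1 (grid_coord s i x + 1/2)"
    by (rule sigma1_nonneg)
  then have M: "0 \<le> M" "M \<le> 1/2"
    by (auto simp: M_def max_def)
  have relayed: "relay (relay (tri s i)) x = v" "relay (relay (coord s i)) x = grid_coord s i x / (2 * real K + 2)"
    using v layer_vals grid_coord_bounds[OF assms, of i] by (simp_all add: relay_id v_def)
  have "euaf_relu (dip s i x) = M"
    unfolding dip_def M_def layer_vals(2)
    using sigma1_nonneg[of "grid_coord s i x + 1/2"] sigma1_le_one[of "grid_coord s i x + 1/2"]
    by (intro euaf_relu_eq) auto
  then have sign_fix: "sign_fix s i x = margin * v - M"
    using relay_id[of "tri s i" x] layer_vals v by (simp add: sign_fix_def v_def)
  have "0 \<le> margin * v" "margin * v \<le> margin"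
    using v margin_pos mult_left_le[OF v(2), of margin] by simp_all
  then have "\<bar>margin * v - M\<bar> \<le> 1"
    unfolding abs_le_iff using M margin_le by (intro conjI) linarith+
  then have "euaf_relu (sign_fix s i x) = margin * max 0 ((margin * v - M) / margin)"
    unfolding sign_fix using margin_pos by (simp add: euaf_relu_eq mult_max_zero_divide)
  also have "(margin * v - M) / margin = v - M / margin"
    using margin_pos by (simp add: field_simps)
  finally have "2 / margin * euaf_relu (sign_fix s i x) = 2 * max 0 (v - M / margin)"
    using margin_pos by simp
  then show ?thesis
    using relayed by (simp add: floor_net_def floor_estimate_def v_def M_def)
qed

lemma code_net_eq: "x \<in> cube \<Longrightarrow> s \<le> CARD('n) \<Longrightarrow> code_net s x = code_estimate s x"
  by (simp add: code_net_def code_estimate_def floor_net_eq)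

lemma weight_net_eq:
  assumes "x \<in> cube" "s \<le> CARD('n)"
  shows "weight_net s x = shift_weight s x"
proof -
  have "euaf_relu (ridge s i x) / margin = boundary_weight s i x" for i
  proof -
    have "\<bar>sigma1 (grid_coord s i x) - 1 + 2 * margin\<bar> \<le> 1"
      using sigma1_nonneg[of "grid_coord s i x"] sigma1_le_one[of "grid_coord s i x"] margin_pos margin_le
      by (simp add: abs_le_iff)
    then show ?thesis
      using tri_layer_values(1)[OF assms] by (simp add: ridge_def euaf_relu_eq boundary_weight_def)
  qed
  then have arg: "weight_arg s x = (1 - (\<Sum>i\<in>UNIV. boundary_weight s i x)) / (2 * real CARD('n) + 1)"
    by (simp add: weight_arg_def)
  have "0 \<le> (\<Sum>i\<in>UNIV. boundary_weight s i x)" "(\<Sum>i\<in>UNIV. boundary_weight s i x) \<le> 2 * real CARD('n)"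
    using sum_nonneg[of UNIV "\<lambda>i. boundary_weight s i x"] sum_mono[of UNIV "\<lambda>i. boundary_weight s i x" "\<lambda>_. 2"]
      boundary_weight_nonneg boundary_weight_le_two by simp_all
  then have "\<bar>weight_arg s x\<bar> \<le> 1"
    unfolding arg by (simp add: abs_le_iff field_simps)
  then show ?thesis
    by (simp add: weight_net_def euaf_relu_eq arg shift_weight_def add_pos_nonneg mult_max_zero_divide)
qed

lemma weight_relay_eq:
  assumes "x \<in> cube" "s \<le> CARD('n)"
  shows "relay (weight_net s) x = shift_weight s x" "relay (relay (weight_net s)) x = shift_weight s x"
  using weight_net_eq[OF assms] shift_weight_bounds[of s x] by (simp_all add: relay_id)

lemma recip_eq:
  assumes "x \<in> cube" "s \<le> CARD('n)"
  shows "recip s x + 1 = 1 / (code_estimate s x + c)"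
proof -
  have "1 \<le> code_estimate s x + c"
    using code_estimate_ge[OF assms] c_large by (simp add: base_def)
  from euaf_reciprocal[OF this] show ?thesis
    by (simp add: recip_def relay_def code_net_eq[OF assms] algebra_simps)
qed

lemma wave_eq:
  assumes "x \<in> cube" "s \<le> CARD('n)"
  shows "wave s x = sigma1 (2 * t / (code_estimate s x + c))"
proof -
  define Z where "Z = code_estimate s x + c"
  have Z: "1 \<le> Z"
    using code_estimate_ge[OF assms] c_large by (simp add: base_def Z_def)
  then have "\<bar>2 * t / Z\<bar> \<le> 2 * \<bar>t\<bar>"
    by (simp add: abs_mult abs_div divide_le_eq mult_le_cancel_left1)
  then have "0 \<le> 2 * t / Z + 2 * of_int k"
    using wave_offset by linarith
  then have "wave s x = sigma1 (2 * t / Z + 2 * of_int k)"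
    using recip_eq[OF assms] by (simp add: wave_def relay_def Z_def[symmetric] euaf_nonneg_eq)
  then show ?thesis
    by (simp add: sigma1_periodic Z_def)
qed

lemma total_recip_eq:
  assumes "x \<in> cube"
  shows "total_recip x + 1 = 1 / (\<Sum>s\<le>CARD('n). shift_weight s x)"
  using euaf_reciprocal[OF sum_shift_weight_ge_one[of x]] weight_relay_eq(2)[OF assms]
  by (simp add: total_recip_def relay_def)


definition shift_average :: "real^'n \<Rightarrow> real" where
  "shift_average x = (\<Sum>s\<le>CARD('n). shift_weight s x * sigma1 (2 * t / (code_estimate s x + c)))
    / (\<Sum>s\<le>CARD('n). shift_weight s x)"

lemma shift_average_bounds: "0 \<le> shift_average x" "shift_average x \<le> 1"
proof -
  have "\<bar>sigma1 y - 1/2\<bar> \<le> 1/2" for y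
    unfolding abs_le_iff using sigma1_nonneg[of y] sigma1_le_one[of y] by (intro conjI) linarith+
  then have "\<bar>shift_average x - 1/2\<bar> \<le> 1/2"
    unfolding shift_average_def using sum_shift_weight_ge_one[of x] shift_weight_bounds
    by (intro weighted_average_close) auto
  then show "0 \<le> shift_average x" "shift_average x \<le> 1"
    unfolding abs_le_iff by linarith+
qed

lemma average_close:
  assumes "x \<in> cube"
  shows "\<bar>average x - (\<Sum>s\<le>CARD('n). shift_weight s x * sigma1 (2 * t / (code_estimate s x + c)))
      / (real CARD('n) + 1)\<bar> \<le> 14 * h^2"
proof -
  define G where "G s = sigma1 (2 * t / (code_estimate s x + c))" for s
  define E where "E s = euaf_mult h (relay (relay (weight_net s)) x) (wave s x) - shift_weight s x * G s" for s
  have "\<bar>E s\<bar> \<le> 14 * h^2" if "s \<le> CARD('n)" for s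
  proof -
    have "0 \<le> shift_weight s x" "shift_weight s x \<le> 1" "0 \<le> G s" "G s \<le> 1"
      using shift_weight_bounds sigma1_nonneg sigma1_le_one by (simp_all add: G_def)
    then show ?thesis
      unfolding E_def weight_relay_eq(2)[OF assms that] wave_eq[OF assms that] G_def[symmetric]
      using h_pos h_le by (intro euaf_mult_error) (simp_all add: abs_le_iff)
  qed
  then have "(\<Sum>s\<le>CARD('n). \<bar>E s\<bar>) \<le> (\<Sum>s\<le>CARD('n). 14 * h^2)"
    by (intro sum_mono) simp
  then have "\<bar>\<Sum>s\<le>CARD('n). E s\<bar> \<le> (\<Sum>s\<le>CARD('n). 14 * h^2)"
    using sum_abs[of E "{..CARD('n)}"] by linarith
  also have "\<dots> = (real CARD('n) + 1) * (14 * h^2)"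
    by simp
  finally have "\<bar>\<Sum>s\<le>CARD('n). E s\<bar> \<le> (real CARD('n) + 1) * (14 * h^2)" .
  moreover have "average x - (\<Sum>s\<le>CARD('n). shift_weight s x * G s) / (real CARD('n) + 1)
      = (\<Sum>s\<le>CARD('n). E s) / (real CARD('n) + 1)"
    by (simp add: average_def E_def sum_subtractf diff_divide_distrib)
  ultimately show ?thesis
    by (simp add: G_def abs_div pos_divide_le_eq mult.commute)
qed

lemma h_sq_small: "14 * h^2 \<le> 1/2"
proof -
  have "h^2 \<le> (1/6)^2"
    using h_pos h_le by (intro power_mono) simp_all
  then show ?thesis
    by (simp add: power_divide)
qed

lemma net_value_product_close:
  assumes "x \<in> cube"
  shows "\<bar>net_value x - (real CARD('n) + 1) * (average x * (total_recip x + 1))\<bar>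
    \<le> (real CARD('n) + 1) * (14 * h^2)"
proof -
  define P where "P = (\<Sum>s\<le>CARD('n). shift_weight s x * sigma1 (2 * t / (code_estimate s x + c)))"
  have "0 \<le> P"
    unfolding P_def using shift_weight_bounds sigma1_nonneg by (intro sum_nonneg mult_nonneg_nonneg)
  moreover have "P \<le> (\<Sum>s\<le>CARD('n). shift_weight s x)"
    unfolding P_def using shift_weight_bounds sigma1_le_one
    by (intro sum_mono) (simp add: mult_left_le)
  ultimately have "0 \<le> P / (real CARD('n) + 1)" "P / (real CARD('n) + 1) \<le> 1"
    using sum_shift_weight_le[of x] by simp_all
  moreover have "\<bar>average x - P / (real CARD('n) + 1)\<bar> \<le> 1/2"
    using average_close[OF assms] h_sq_small by (simp add: P_def)
  ultimately have "-1/2 \<le> average x" "average x \<le> 3/2"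
    unfolding abs_le_iff by linarith+
  moreover have "0 < total_recip x + 1" "total_recip x + 1 \<le> 1"
    using total_recip_eq[OF assms] sum_shift_weight_ge_one[of x] by simp_all
  ultimately have "\<bar>average x + (total_recip x + 1)\<bar> \<le> 3" "\<bar>average x - (total_recip x + 1)\<bar> \<le> 3"
    unfolding abs_le_iff by (intro conjI; linarith)+
  then have "\<bar>euaf_mult h (average x) (total_recip x + 1) - average x * (total_recip x + 1)\<bar> \<le> 14 * h^2"
    using h_pos h_le by (intro euaf_mult_error)
  then show ?thesis
    by (simp add: net_value_def abs_mult right_diff_distrib[symmetric] mult_left_mono)
qed

lemma net_value_close:
  assumes "x \<in> cube"
  shows "\<bar>net_value x - shift_average x\<bar> \<le> 28 * (real CARD('n) + 1) * h^2"
proof -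
  define D where "D = real CARD('n) + 1"
  define P where "P = (\<Sum>s\<le>CARD('n). shift_weight s x * sigma1 (2 * t / (code_estimate s x + c)))"
  define R where "R = total_recip x + 1"
  have R: "0 < R" "R \<le> 1" "shift_average x = P * R"
    using total_recip_eq[OF assms] sum_shift_weight_ge_one[of x]
    by (simp_all add: R_def P_def shift_average_def)
  have "0 < D"
    by (simp add: D_def)
  then have "net_value x - shift_average x = (net_value x - D * (average x * R)) + D * R * (average x - P / D)"
    using R(3) by (simp add: field_simps)
  moreover have "\<bar>net_value x - D * (average x * R)\<bar> \<le> D * (14 * h^2)"
    using net_value_product_close[OF assms] by (simp add: D_def R_def)
  moreover have "\<bar>D * R * (average x - P / D)\<bar> \<le> D * 1 * (14 * h^2)"
    unfolding abs_mult using R average_close[OF assms]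
    by (intro mult_mono) (simp_all add: D_def P_def)
  ultimately show ?thesis
    using abs_triangle_ineq[of "net_value x - D * (average x * R)" "D * R * (average x - P / D)"]
    by (simp add: D_def algebra_simps)
qed

lemma network_eq_net_value:
  assumes "x \<in> cube"
  shows "network x = net_value x"
proof -
  have "\<bar>net_value x - shift_average x\<bar> \<le> 1"
    using net_value_close[OF assms] h_small by simp
  then have "0 \<le> (net_value x + 1) / 3" "(net_value x + 1) / 3 \<le> 1"
    using shift_average_bounds[of x] by (simp_all add: abs_le_iff)
  then show ?thesis
    by (simp add: network_def relay_power_id add_divide_distrib)
qed

text \<open>On a shift with positive weight, the code is exact and the wave reads off the sample of its cell.\<close>

lemma shift_average_close:
  assumes f: "\<And>x. x \<in> cube \<Longrightarrow> 0 \<le> f x \<and> f x \<le> 1"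
    and modulus: "\<And>x x'. x \<in> cube \<Longrightarrow> x' \<in> cube \<Longrightarrow> (\<forall>i. \<bar>x $ i - x' $ i\<bar> \<le> (b - a) / real K)
      \<Longrightarrow> \<bar>f x - f x'\<bar> \<le> \<omega>"
    and orbit: "\<And>n. n < base ^ Suc CARD('n) \<Longrightarrow>
      \<bar>t * (1 / (of_nat n + c)) - of_int (m n) - cell_sample f n / 2\<bar> < e"
    and "x \<in> cube"
  shows "\<bar>shift_average x - f x\<bar> \<le> 2 * e + \<omega>"
  unfolding shift_average_def
proof (rule weighted_average_close)
  fix s
  assume s: "s \<in> {..CARD('n)}" "0 < shift_weight s x"
  define n where "n = cell_code s x"
  have "code_estimate s x = real n"
    using code_estimate_eq_cell_code[OF \<open>x \<in> cube\<close>] s by (simp add: n_def)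
  moreover have "0 \<le> cell_sample f n \<and> cell_sample f n \<le> 1"
    using cell_sample_bounds f by blast
  ultimately have "\<bar>sigma1 (2 * (t * (1 / (of_nat n + c)))) - cell_sample f n\<bar> < 2 * e"
    using orbit[of n] cell_code_less[OF \<open>x \<in> cube\<close>, of s] s(1)
    by (intro sigma1_double_close[where m = "m n"]) (simp_all add: n_def)
  then have "\<bar>sigma1 (2 * t / (code_estimate s x + c)) - cell_sample f n\<bar> < 2 * e"
    using \<open>code_estimate s x = real n\<close> by simp
  moreover have "\<bar>cell_sample f n - f x\<bar> \<le> \<omega>"
    unfolding n_def using modulus \<open>x \<in> cube\<close> s(1) by (intro cell_sample_close) auto
  ultimately show "\<bar>sigma1 (2 * t / (code_estimate s x + c)) - f x\<bar> \<le> 2 * e + \<omega>"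
    by linarith
qed (use sum_shift_weight_ge_one[of x] shift_weight_bounds in auto)

lemma network_close:
  assumes "\<And>x. x \<in> cube \<Longrightarrow> 0 \<le> f x \<and> f x \<le> 1"
    and "\<And>x x'. x \<in> cube \<Longrightarrow> x' \<in> cube \<Longrightarrow> (\<forall>i. \<bar>x $ i - x' $ i\<bar> \<le> (b - a) / real K)
      \<Longrightarrow> \<bar>f x - f x'\<bar> \<le> \<omega>"
    and "\<And>n. n < base ^ Suc CARD('n) \<Longrightarrow>
      \<bar>t * (1 / (of_nat n + c)) - of_int (m n) - cell_sample f n / 2\<bar> < e"
    and "x \<in> cube"
  shows "\<bar>network x - f x\<bar> \<le> 28 * (real CARD('n) + 1) * h^2 + 2 * e + \<omega>"
proof -
  have "\<bar>shift_average x - f x\<bar> \<le> 2 * e + \<omega>"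
    by (rule shift_average_close[where m = m]) (use assms in auto)
  then show ?thesis
    using net_value_close[OF assms(4)] network_eq_net_value[OF assms(4)] by linarith
qed

end

lemma compact_cube: "compact {x :: real^'n::finite. \<forall>i. x $ i \<in> {a..b}}"
proof -
  have "{x :: real^'n. \<forall>i. x $ i \<in> {a..b}} = cbox (\<chi> i. a) (\<chi> i. b)"
    by (auto simp: mem_box_cart)
  then show ?thesis
    by simp
qed

lemma continuous_on_cube_bounded:
  fixes f :: "real^'n::finite \<Rightarrow> real"
  assumes "continuous_on {x. \<forall>i. x $ i \<in> {a..b}} f"
  obtains B where "0 \<le> B" "\<And>x. x \<in> {x. \<forall>i. x $ i \<in> {a..b}} \<Longrightarrow> \<bar>f x\<bar> \<le> B"
proof -
  have "bounded (f ` {x. \<forall>i. x $ i \<in> {a..b}})"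
    using assms compact_cube by (intro compact_imp_bounded compact_continuous_image)
  then obtain B where "\<forall>y\<in>f ` {x. \<forall>i. x $ i \<in> {a..b}}. norm y \<le> B"
    unfolding bounded_iff by blast
  then show ?thesis
    by (intro that[of "max 0 B"]) force+
qed

lemma cube_grid_modulus:
  fixes f :: "real^'n::finite \<Rightarrow> real"
  assumes "a < b" "continuous_on {x. \<forall>i. x $ i \<in> {a..b}} f" "0 < \<omega>"
  obtains K :: nat where "CARD('n) \<le> K"
    "\<And>x x'. x \<in> {x. \<forall>i. x $ i \<in> {a..b}} \<Longrightarrow> x' \<in> {x. \<forall>i. x $ i \<in> {a..b}} \<Longrightarrow>
      (\<forall>i. \<bar>x $ i - x' $ i\<bar> \<le> (b - a) / real K) \<Longrightarrow> \<bar>f x - f x'\<bar> \<le> \<omega>"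
proof -
  define S where "S = {x :: real^'n. \<forall>i. x $ i \<in> {a..b}}"
  have "uniformly_continuous_on S f"
    using assms(2) compact_cube unfolding S_def by (rule compact_uniformly_continuous)
  from this[unfolded uniformly_continuous_on_def, rule_format, OF assms(3)]
  obtain \<delta> where \<delta>: "0 < \<delta>" "\<And>x x'. x \<in> S \<Longrightarrow> x' \<in> S \<Longrightarrow> dist x' x < \<delta> \<Longrightarrow> dist (f x') (f x) < \<omega>"
    by blast
  define d where "d = CARD('n)"
  define K where "K = max d (nat \<lceil>real d * (b - a) / \<delta>\<rceil> + 1)"
  have "real d * (b - a) / \<delta> < real K"
    unfolding K_def by linarith
  then have K: "d \<le> K" "0 < K" "real d * ((b - a) / real K) < \<delta>"
    using \<delta>(1) by (auto simp: K_def d_def field_simps)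
  have "\<bar>f x - f x'\<bar> \<le> \<omega>" if "x \<in> S" "x' \<in> S" "\<forall>i. \<bar>x $ i - x' $ i\<bar> \<le> (b - a) / real K" for x x'
  proof -
    have "dist x' x \<le> (\<Sum>i\<in>UNIV. \<bar>(x' - x) $ i\<bar>)"
      unfolding dist_norm by (rule norm_le_l1_cart)
    also have "\<dots> \<le> (\<Sum>i\<in>(UNIV :: 'n set). (b - a) / real K)"
      using that(3) by (intro sum_mono) (simp add: abs_minus_commute)
    also have "\<dots> < \<delta>"
      using K(3) by (simp add: d_def)
    finally show ?thesis
      using \<delta>(2)[OF that(1,2)] by (simp add: dist_real_def abs_minus_commute)
  qed
  then show ?thesis
    using that K(1) unfolding S_def d_def by blast
qed

lemma small_scale_exists:
  assumes "0 < \<eta>" "\<eta> \<le> 1" "1 \<le> D"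
  obtains h :: real where "0 < h" "h \<le> 1/6" "28 * D * h^2 \<le> \<eta> / 4"
proof
  define h where "h = \<eta> / (112 * D)"
  show "0 < h" "h \<le> 1/6"
    using assms by (simp_all add: h_def field_simps)
  have "28 * D * h^2 = (112 * D * h) * h / 4"
    by (simp add: power2_eq_square field_simps)
  also have "112 * D * h = \<eta>"
    using assms by (simp add: h_def)
  also have "\<eta> * h / 4 \<le> \<eta> / 4"
    using mult_left_le[of h \<eta>] assms \<open>h \<le> 1/6\<close> by simp
  finally show "28 * D * h^2 \<le> \<eta> / 4" .
qed

lemma unit_range_approximation:
  fixes f :: "real^'n::finite \<Rightarrow> real"
  assumes ab: "a < b" and cont: "continuous_on {x. \<forall>i. x $ i \<in> {a..b}} f"
    and range: "\<And>x. x \<in> {x. \<forall>i. x $ i \<in> {a..b}} \<Longrightarrow> 0 \<le> f x \<and> f x \<le> 1"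
    and \<eta>: "0 < \<eta>" "\<eta> \<le> 1"
  shows "\<exists>\<phi> \<in> H_net (36 * CARD('n) * (2 * CARD('n) + 1)) 11.
    \<forall>x \<in> {x. \<forall>i. x $ i \<in> {a..b}}. \<bar>\<phi> x - f x\<bar> < \<eta>"
proof -
  obtain K where K: "CARD('n) \<le> K"
    and modulus: "\<And>x x'. x \<in> {x. \<forall>i. x $ i \<in> {a..b}} \<Longrightarrow> x' \<in> {x. \<forall>i. x $ i \<in> {a..b}} \<Longrightarrow>
      (\<forall>i. \<bar>x $ i - x' $ i\<bar> \<le> (b - a) / real K) \<Longrightarrow> \<bar>f x - f x'\<bar> \<le> \<eta> / 4"
    by (rule cube_grid_modulus[OF ab cont, of "\<eta> / 4"]) (use \<eta> in simp_all)
  define d where "d = CARD('n)"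
  obtain ei where ei: "bij_betw ei {..<d} (UNIV :: 'n set)"
    using ex_bij_betw_nat_finite[of "UNIV :: 'n set"] by (auto simp: d_def atLeast0LessThan)
  interpret shifted_grids a b K ei
    using ab K ei by unfold_locales (simp_all add: d_def)
  obtain c where c: "1 + real (d * (K + 2) ^ d) < c"
    and indep: "module.independent (\<lambda>r. (*) (real_of_int r)) ((\<lambda>n. 1 / (of_nat n + c)) ` {..<base ^ Suc d})"
    and inj: "inj_on (\<lambda>n. 1 / (of_nat n + c)) {..<base ^ Suc d}"
    using reciprocal_shifts_independent[of "1 + real (d * (K + 2) ^ d)"] by auto
  obtain t m where orbit: "\<And>n. n < base ^ Suc d \<Longrightarrow>
      \<bar>t * (1 / (of_nat n + c)) - of_int (m n) - cell_sample f n / 2\<bar> < \<eta> / 8"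
    using Kronecker_thm_1[OF indep inj, of "\<eta> / 8" "\<lambda>n. cell_sample f n / 2"] \<eta> by auto
  obtain h where h: "0 < h" "h \<le> 1/6" "28 * (real d + 1) * h^2 \<le> \<eta> / 4"
    using small_scale_exists[OF \<eta>, of "real d + 1"] by auto
  interpret euaf_network a b K ei c t h "\<lceil>\<bar>t\<bar>\<rceil>"
    using c h \<eta> by unfold_locales (simp_all add: d_def)
  have "\<bar>network x - f x\<bar> < \<eta>" if "x \<in> cube" for x
  proof -
    have "\<bar>network x - f x\<bar> \<le> 28 * (real d + 1) * h^2 + 2 * (\<eta> / 8) + \<eta> / 4"
      using network_close[of f "\<eta> / 4" m "\<eta> / 8" x] range modulus orbit that
      unfolding cube_def d_def by simp
    then show ?thesis
      using h(3) \<eta> by linarith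
  qed
  then show ?thesis
    using network_in_H_net unfolding cube_def by blast
qed

theorem theorem1:
  fixes f :: "real^'n::finite \<Rightarrow> real" and a b \<epsilon> :: real
  assumes "a < b"
    and "continuous_on {x. \<forall>i. x $ i \<in> {a..b}} f"
    and "\<epsilon> > 0"
  shows "\<exists>\<phi> \<in> (H_net (36 * CARD('n) * (2 * CARD('n) + 1)) 11 :: (real^'n \<Rightarrow> real) set).
           \<forall>x. (\<forall>i. x $ i \<in> {a..b}) \<longrightarrow> \<bar>\<phi> x - f x\<bar> < \<epsilon>"
proof -
  define S where "S = {x :: real^'n. \<forall>i. x $ i \<in> {a..b}}"
  obtain B where B: "\<And>x. x \<in> S \<Longrightarrow> \<bar>f x\<bar> \<le> B" "0 \<le> B"
    using continuous_on_cube_bounded[OF assms(2)] unfolding S_def by blast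
  define A where "A = 2 * B + 1"
  have A: "1 \<le> A"
    using B(2) by (simp add: A_def)
  define g where "g x = (f x + B) / A" for x
  have "continuous_on S g"
    unfolding g_def[abs_def] S_def using assms(2) A by (intro continuous_intros) auto
  moreover have "0 \<le> g x \<and> g x \<le> 1" if "x \<in> S" for x
    using B(1)[OF that] A by (auto simp: g_def A_def field_simps abs_le_iff)
  ultimately obtain \<phi> where \<phi>: "\<phi> \<in> H_net (36 * CARD('n) * (2 * CARD('n) + 1)) 11"
    "\<And>x. x \<in> S \<Longrightarrow> \<bar>\<phi> x - g x\<bar> < min (\<epsilon> / A) 1"
    using unit_range_approximation[OF assms(1), of g "min (\<epsilon> / A) 1"] assms(3) A
    unfolding S_def by auto
  have "\<bar>(A * \<phi> x - B) - f x\<bar> < \<epsilon>" if "x \<in> S" for x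
  proof -
    have "\<bar>(A * \<phi> x - B) - f x\<bar> = A * \<bar>\<phi> x - g x\<bar>"
      using A by (simp add: g_def abs_mult field_simps)
    also have "\<dots> < A * (\<epsilon> / A)"
      using \<phi>(2)[OF that] A by (intro mult_strict_left_mono) auto
    finally show ?thesis
      using A by simp
  qed
  moreover have "(\<lambda>x. A * \<phi> x + - B) \<in> H_net (36 * CARD('n) * (2 * CARD('n) + 1)) 11"
    by (rule H_net_affine_output[OF \<phi>(1)])
  ultimately show ?thesis
    unfolding S_def by (intro bexI[of _ "\<lambda>x. A * \<phi> x + - B"]) auto
qed

end
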